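(* Let $x_2=F(t,x,x_1)$ be a second-order ODE and suppose that for some smooth $H=H(t,x,x_1)$ the system $(S_H)$ admits a nonlocal symmetry $\mathbf{v}=\xi\partial_t+\eta^0\partial_x+\psi^0\partial_w$ (coefficients functions of $(t,x,x_1,w)$) with associated functionally independent functions $z=z(t,x)$, $\zeta=\zeta(t,x,x_1)$, i.e. $\mathbf v(z)=0$, $\mathbf v^{(1)}(\zeta)|_\Delta=0$ and the equation can be written in terms of $\{z,\zeta,\zeta_z\}$ as a first-order ODE. Then: (i) If $\xi\neq0$, the functions $\eta^0/\xi$ and $\widetilde\lambda=\frac{\xi_t+\xi_xx_1+\xi_{x_1}F+\xi_wH}{\xi}$ do not depend on $w$, and the pair $\widetilde{\mathbf X}=\partial_t+\frac{\eta^0}{\xi}\partial_x$, $\widetilde\lambda$ defines a $\lambda$-symmetry of $x_2=F$. (ii) If $\xi=0$, the function $\widetilde\lambda=\frac{\eta^0_t+\eta^0_xx_1+\eta^0_{x_1}F+\eta^0_wH}{\eta^0}$ does not depend on $w$, and the pair $\widetilde{\mathbf X}=\partial_x$, $\widetilde\lambda$ defines a $\lambda$-symmetry of $x_2=F$. In both cases $\{z,\zeta,\zeta_z\}$ is a complete system of invariants of $\widetilde{\mathbf X}^{[\widetilde\lambda,(1)]}$.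
   Context: Let $F=F(t,x,x_1)$ be smooth, and for a smooth $H=H(t,x,x_1)$ let $(S_H)$ be the system $x_2=F(t,x,x_1)$, $w_1=H(t,x,x_1)$ in the dependent variables $x,w$; $\Delta$ denotes the submanifold of the jet space defined by $(S_H)$. $\widetilde D_t=\partial_t+x_1\partial_x+x_2\partial_{x_1}+w_1\partial_w+\cdots$ is the total derivative in these variables, and $D_t=\partial_t+x_1\partial_x+x_2\partial_{x_1}+\cdots$. For $\mathbf v=\xi\partial_t+\eta^0\partial_x+\psi^0\partial_w$ with coefficients depending on $(t,x,x_1,w)$, its prolongation $\mathbf v^{(k)}$ adds $\sum_{i=1}^k(\eta^i\partial_{x_i}+\psi^i\partial_{w_i})$ with $\eta^i=\widetilde D_t(\eta^{i-1})-\widetilde D_t(\xi)x_i$, $\psi^i=\widetilde D_t(\psi^{i-1})-\widetilde D_t(\xi)w_i$. $\mathbf v$ is a (generalized) symmetry of $(S_H)$ if $\mathbf v^{(2)}(x_2-F)$ and $\mathbf v^{(2)}(w_1-H)$ vanish on $\Delta$. A nonlocal symmetry of $x_2=F$ associated to $(S_H)$ is such a symmetry with $(\xi_w)^2+(\eta^0_w)^2\neq0$ for which there exist functionally independent $z=z(t,x)$, $\zeta=\zeta(t,x,x_1)$ (with $\zeta_{x_1}\ne0$) such that $\mathbf v(z)=0$, $\mathbf v^{(1)}(\zeta)|_\Delta=0$, and $x_2=F$ can be written in terms of $\{z,\zeta,\zeta_z\}$, $\zeta_z=D_t\zeta/D_tz$, as a first-order ODE. For $\lambda=\lambda(t,x,x_1)$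 and $\mathbf X=\rho(t,x)\partial_t+\phi^0(t,x)\partial_x$, $\mathbf{X}^{[\lambda,(k)]}=\rho\partial_t+\phi^0\partial_x+\sum_{i=1}^k\phi^{[\lambda,(i)]}\partial_{x_i}$, $\phi^{[\lambda,(0)]}=\phi^0$, $\phi^{[\lambda,(i)]}=D_t(\phi^{[\lambda,(i-1)]})-D_t(\rho)x_i+\lambda(\phi^{[\lambda,(i-1)]}-\rho x_i)$; $(\mathbf X,\lambda)$ defines a $\lambda$-symmetry of $x_2=F$ if $\mathbf X^{[\lambda,(2)]}$ is tangent to $\{x_2=F\}$. *)

theory Defs
  imports "HOL-Analysis.Analysis"
begin

text \<open>g is C-infinity iff it lies in a family of everywhere (Frechet) differentiable functions
  that is closed under taking directional derivatives.\<close>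
definition smooth :: "('a::real_normed_vector \<Rightarrow> real) \<Rightarrow> bool" where
  "smooth g \<longleftrightarrow> (\<exists>S. g \<in> S \<and> (\<forall>h\<in>S. \<exists>h'. (\<forall>y. (h has_derivative h' y) (at y))
                                          \<and> (\<forall>v. (\<lambda>y. h' y v) \<in> S)))"

definition smooth2 :: "(real \<Rightarrow> real \<Rightarrow> real) \<Rightarrow> bool" where
  "smooth2 f \<longleftrightarrow> smooth (\<lambda>(a,b). f a b)"
definition smooth3 :: "(real \<Rightarrow> real \<Rightarrow> real \<Rightarrow> real) \<Rightarrow> bool" where
  "smooth3 f \<longleftrightarrow> smooth (\<lambda>(a,b,c). f a b c)"
definition smooth4 :: "(real \<Rightarrow> real \<Rightarrow> real \<Rightarrow> real \<Rightarrow> real) \<Rightarrow> bool" where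
  "smooth4 f \<longleftrightarrow> smooth (\<lambda>(a,b,c,d). f a b c d)"

definition pt4 :: "(real \<Rightarrow> real \<Rightarrow> real \<Rightarrow> real \<Rightarrow> real) \<Rightarrow> real \<Rightarrow> real \<Rightarrow> real \<Rightarrow> real \<Rightarrow> real" where
  "pt4 g t x p w = deriv (\<lambda>s. g s x p w) t"
definition px4 :: "(real \<Rightarrow> real \<Rightarrow> real \<Rightarrow> real \<Rightarrow> real) \<Rightarrow> real \<Rightarrow> real \<Rightarrow> real \<Rightarrow> real \<Rightarrow> real" where
  "px4 g t x p w = deriv (\<lambda>s. g t s p w) x"
definition pp4 :: "(real \<Rightarrow> real \<Rightarrow> real \<Rightarrow> real \<Rightarrow> real) \<Rightarrow> real \<Rightarrow> real \<Rightarrow> real \<Rightarrow> real \<Rightarrow> real" where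
  "pp4 g t x p w = deriv (\<lambda>s. g t x s w) p"
definition pw4 :: "(real \<Rightarrow> real \<Rightarrow> real \<Rightarrow> real \<Rightarrow> real) \<Rightarrow> real \<Rightarrow> real \<Rightarrow> real \<Rightarrow> real \<Rightarrow> real" where
  "pw4 g t x p w = deriv (\<lambda>s. g t x p s) w"

definition lam_tilde :: "(real \<Rightarrow> real \<Rightarrow> real \<Rightarrow> real \<Rightarrow> real) \<Rightarrow> (real \<Rightarrow> real \<Rightarrow> real \<Rightarrow> real)
    \<Rightarrow> (real \<Rightarrow> real \<Rightarrow> real \<Rightarrow> real) \<Rightarrow> real \<Rightarrow> real \<Rightarrow> real \<Rightarrow> real \<Rightarrow> real" where
  "lam_tilde c F H t x p w =
     (pt4 c t x p w + px4 c t x p w * p + pp4 c t x p w * F t x p + pw4 c t x p w * H t x p) / c t x p w"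

text \<open>A jet point is (t, X, W) with X i = x_i and W i = w_i (X 0 = x, W 0 = w).\<close>
type_synonym wjet_fun = "real \<Rightarrow> (nat \<Rightarrow> real) \<Rightarrow> (nat \<Rightarrow> real) \<Rightarrow> real"

definition wpd_t :: "wjet_fun \<Rightarrow> wjet_fun" where
  "wpd_t f t X W = deriv (\<lambda>s. f s X W) t"
definition wpd_x :: "nat \<Rightarrow> wjet_fun \<Rightarrow> wjet_fun" where
  "wpd_x i f t X W = deriv (\<lambda>s. f t (X(i := s)) W) (X i)"
definition wpd_w :: "nat \<Rightarrow> wjet_fun \<Rightarrow> wjet_fun" where
  "wpd_w i f t X W = deriv (\<lambda>s. f t X (W(i := s))) (W i)"

text \<open>Total derivative tilde-D_t = d_t + x1 d_x + x2 d_x1 + ... + w1 d_w + w2 d_w1 + ...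
  (the series has only finitely many nonzero terms for functions of finitely many coordinates).\<close>
definition totDw :: "wjet_fun \<Rightarrow> wjet_fun" where
  "totDw f t X W = wpd_t f t X W
     + (\<Sum>i. X (Suc i) * wpd_x i f t X W + W (Suc i) * wpd_w i f t X W)"

definition lift4 :: "(real \<Rightarrow> real \<Rightarrow> real \<Rightarrow> real \<Rightarrow> real) \<Rightarrow> wjet_fun" where
  "lift4 g t X W = g t (X 0) (X 1) (W 0)"
definition lift3w :: "(real \<Rightarrow> real \<Rightarrow> real \<Rightarrow> real) \<Rightarrow> wjet_fun" where
  "lift3w g t X W = g t (X 0) (X 1)"
definition lift2w :: "(real \<Rightarrow> real \<Rightarrow> real) \<Rightarrow> wjet_fun" where
  "lift2w g t X W = g t (X 0)"

fun eta_prol :: "wjet_fun \<Rightarrow> wjet_fun \<Rightarrow> nat \<Rightarrow> wjet_fun" where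
  "eta_prol xi eta 0 = eta"
| "eta_prol xi eta (Suc i) =
     (\<lambda>t X W. totDw (eta_prol xi eta i) t X W - totDw xi t X W * X (Suc i))"

fun psi_prol :: "wjet_fun \<Rightarrow> wjet_fun \<Rightarrow> nat \<Rightarrow> wjet_fun" where
  "psi_prol xi psi 0 = psi"
| "psi_prol xi psi (Suc i) =
     (\<lambda>t X W. totDw (psi_prol xi psi i) t X W - totDw xi t X W * W (Suc i))"

definition prol_apply :: "(real \<Rightarrow> real \<Rightarrow> real \<Rightarrow> real \<Rightarrow> real) \<Rightarrow> (real \<Rightarrow> real \<Rightarrow> real \<Rightarrow> real \<Rightarrow> real)
    \<Rightarrow> (real \<Rightarrow> real \<Rightarrow> real \<Rightarrow> real \<Rightarrow> real) \<Rightarrow> nat \<Rightarrow> wjet_fun \<Rightarrow> wjet_fun" where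
  "prol_apply xi eta psi k f t X W =
     lift4 xi t X W * wpd_t f t X W
     + (\<Sum>i\<le>k. eta_prol (lift4 xi) (lift4 eta) i t X W * wpd_x i f t X W
              + psi_prol (lift4 xi) (lift4 psi) i t X W * wpd_w i f t X W)"

text \<open>Delta: the (infinitely prolonged) submanifold defined by x2 = F, w1 = H.\<close>
definition Delta :: "(real \<Rightarrow> real \<Rightarrow> real \<Rightarrow> real) \<Rightarrow> (real \<Rightarrow> real \<Rightarrow> real \<Rightarrow> real)
    \<Rightarrow> (real \<times> (nat \<Rightarrow> real) \<times> (nat \<Rightarrow> real)) set" where
  "Delta F H = {(t, X, W). \<forall>k. X (k + 2) = (totDw ^^ k) (lift3w F) t X W
                              \<and> W (Suc k) = (totDw ^^ k) (lift3w H) t X W}"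

definition gen_symmetry :: "(real \<Rightarrow> real \<Rightarrow> real \<Rightarrow> real) \<Rightarrow> (real \<Rightarrow> real \<Rightarrow> real \<Rightarrow> real)
    \<Rightarrow> (real \<Rightarrow> real \<Rightarrow> real \<Rightarrow> real \<Rightarrow> real) \<Rightarrow> (real \<Rightarrow> real \<Rightarrow> real \<Rightarrow> real \<Rightarrow> real)
    \<Rightarrow> (real \<Rightarrow> real \<Rightarrow> real \<Rightarrow> real \<Rightarrow> real) \<Rightarrow> bool" where
  "gen_symmetry F H xi eta psi \<longleftrightarrow>
     (\<forall>(t, X, W) \<in> Delta F H.
        prol_apply xi eta psi 2 (\<lambda>t X W. X 2 - F t (X 0) (X 1)) t X W = 0
      \<and> prol_apply xi eta psi 2 (\<lambda>t X W. W 1 - H t (X 0) (X 1)) t X W = 0)"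

type_synonym jet_fun = "real \<Rightarrow> (nat \<Rightarrow> real) \<Rightarrow> real"

definition pd_t :: "jet_fun \<Rightarrow> jet_fun" where
  "pd_t f t X = deriv (\<lambda>s. f s X) t"
definition pd_x :: "nat \<Rightarrow> jet_fun \<Rightarrow> jet_fun" where
  "pd_x i f t X = deriv (\<lambda>s. f t (X(i := s))) (X i)"

definition totD :: "jet_fun \<Rightarrow> jet_fun" where
  "totD f t X = pd_t f t X + (\<Sum>i. X (Suc i) * pd_x i f t X)"

definition lift2 :: "(real \<Rightarrow> real \<Rightarrow> real) \<Rightarrow> jet_fun" where
  "lift2 g t X = g t (X 0)"
definition lift3 :: "(real \<Rightarrow> real \<Rightarrow> real \<Rightarrow> real) \<Rightarrow> jet_fun" where
  "lift3 g t X = g t (X 0) (X 1)"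

definition zeta_z :: "(real \<Rightarrow> real \<Rightarrow> real) \<Rightarrow> (real \<Rightarrow> real \<Rightarrow> real \<Rightarrow> real) \<Rightarrow> jet_fun" where
  "zeta_z z zeta t X = totD (lift3 zeta) t X / totD (lift2 z) t X"

definition func_indep :: "(real \<Rightarrow> real \<Rightarrow> real) \<Rightarrow> (real \<Rightarrow> real \<Rightarrow> real \<Rightarrow> real) \<Rightarrow> bool" where
  "func_indep z zeta \<longleftrightarrow> (\<forall>t X a b.
      a * pd_t (lift2 z) t X + b * pd_t (lift3 zeta) t X = 0
    \<and> a * pd_x 0 (lift2 z) t X + b * pd_x 0 (lift3 zeta) t X = 0
    \<and> a * pd_x 1 (lift2 z) t X + b * pd_x 1 (lift3 zeta) t X = 0 \<longrightarrow> a = 0 \<and> b = 0)"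

definition reducible :: "(real \<Rightarrow> real \<Rightarrow> real \<Rightarrow> real) \<Rightarrow> (real \<Rightarrow> real \<Rightarrow> real)
    \<Rightarrow> (real \<Rightarrow> real \<Rightarrow> real \<Rightarrow> real) \<Rightarrow> bool" where
  "reducible F z zeta \<longleftrightarrow> (\<exists>G :: real \<Rightarrow> real \<Rightarrow> real. \<forall>t X. totD (lift2 z) t X \<noteq> 0 \<longrightarrow>
      (X 2 = F t (X 0) (X 1) \<longleftrightarrow> zeta_z z zeta t X = G (z t (X 0)) (zeta t (X 0) (X 1))))"

definition nonlocal_symmetry :: "(real \<Rightarrow> real \<Rightarrow> real \<Rightarrow> real) \<Rightarrow> (real \<Rightarrow> real \<Rightarrow> real \<Rightarrow> real)
    \<Rightarrow> (real \<Rightarrow> real \<Rightarrow> real \<Rightarrow> real \<Rightarrow> real) \<Rightarrow> (real \<Rightarrow> real \<Rightarrow> real \<Rightarrow> real \<Rightarrow> real)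
    \<Rightarrow> (real \<Rightarrow> real \<Rightarrow> real \<Rightarrow> real \<Rightarrow> real) \<Rightarrow> (real \<Rightarrow> real \<Rightarrow> real)
    \<Rightarrow> (real \<Rightarrow> real \<Rightarrow> real \<Rightarrow> real) \<Rightarrow> bool" where
  "nonlocal_symmetry F H xi eta psi z zeta \<longleftrightarrow>
     smooth4 xi \<and> smooth4 eta \<and> smooth4 psi \<and> smooth2 z \<and> smooth3 zeta
   \<and> gen_symmetry F H xi eta psi
   \<and> (\<exists>t x p w. (pw4 xi t x p w)\<^sup>2 + (pw4 eta t x p w)\<^sup>2 \<noteq> 0)
   \<and> func_indep z zeta
   \<and> (\<forall>t X. pd_x 1 (lift3 zeta) t X \<noteq> 0)
   \<and> (\<forall>t X W. prol_apply xi eta psi 0 (lift2w z) t X W = 0)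
   \<and> (\<forall>(t, X, W) \<in> Delta F H. prol_apply xi eta psi 1 (lift3w zeta) t X W = 0)
   \<and> reducible F z zeta"

fun phi_lam :: "(real \<Rightarrow> real \<Rightarrow> real) \<Rightarrow> (real \<Rightarrow> real \<Rightarrow> real) \<Rightarrow> (real \<Rightarrow> real \<Rightarrow> real \<Rightarrow> real)
    \<Rightarrow> nat \<Rightarrow> jet_fun" where
  "phi_lam rho phi lam 0 = lift2 phi"
| "phi_lam rho phi lam (Suc i) =
     (\<lambda>t X. totD (phi_lam rho phi lam i) t X - totD (lift2 rho) t X * X (Suc i)
            + lift3 lam t X * (phi_lam rho phi lam i t X - rho t (X 0) * X (Suc i)))"

definition lam_prol_apply :: "(real \<Rightarrow> real \<Rightarrow> real) \<Rightarrow> (real \<Rightarrow> real \<Rightarrow> real)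
    \<Rightarrow> (real \<Rightarrow> real \<Rightarrow> real \<Rightarrow> real) \<Rightarrow> nat \<Rightarrow> jet_fun \<Rightarrow> jet_fun" where
  "lam_prol_apply rho phi lam k f t X =
     rho t (X 0) * pd_t f t X + (\<Sum>i\<le>k. phi_lam rho phi lam i t X * pd_x i f t X)"

definition lambda_symmetry :: "(real \<Rightarrow> real \<Rightarrow> real \<Rightarrow> real) \<Rightarrow> (real \<Rightarrow> real \<Rightarrow> real)
    \<Rightarrow> (real \<Rightarrow> real \<Rightarrow> real) \<Rightarrow> (real \<Rightarrow> real \<Rightarrow> real \<Rightarrow> real) \<Rightarrow> bool" where
  "lambda_symmetry F rho phi lam \<longleftrightarrow>
     (\<forall>t X. X 2 = F t (X 0) (X 1) \<longrightarrow>
        lam_prol_apply rho phi lam 2 (\<lambda>t X. X 2 - F t (X 0) (X 1)) t X = 0)"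

text \<open>Is is a complete system of invariants of X^[lam,(2)] on the region V of the 2-jet space
  (coordinates t, x, x1, x2): three functionally independent invariants of a nowhere vanishing
  vector field on a 4-dimensional space.\<close>
definition complete_invariants2 :: "(real \<Rightarrow> real \<Rightarrow> real) \<Rightarrow> (real \<Rightarrow> real \<Rightarrow> real)
    \<Rightarrow> (real \<Rightarrow> real \<Rightarrow> real \<Rightarrow> real) \<Rightarrow> jet_fun list \<Rightarrow> (real \<times> (nat \<Rightarrow> real)) set \<Rightarrow> bool" where
  "complete_invariants2 rho phi lam Is V \<longleftrightarrow>
     length Is = 3
   \<and> (\<forall>(t, X) \<in> V. rho t (X 0) \<noteq> 0 \<or> (\<exists>i\<le>2. phi_lam rho phi lam i t X \<noteq> 0))
   \<and> (\<forall>(t, X) \<in> V. \<forall>I \<in> set Is. lam_prol_apply rho phi lam 2 I t X = 0)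
   \<and> (\<forall>(t, X) \<in> V. \<forall>c :: nat \<Rightarrow> real.
        (\<Sum>k<3. c k * pd_t (Is ! k) t X) = 0
      \<and> (\<forall>j\<le>2. (\<Sum>k<3. c k * pd_x j (Is ! k) t X) = 0) \<longrightarrow> (\<forall>k<3. c k = 0))"

end

theory Submission
  imports Defs
begin

text \<open>Write \<xi> = \<rho> c and \<eta>0 = \<phi> c with c nowhere zero, \<rho> constant and \<phi> = \<phi>(t,x): in case (i)
  \<rho> = 1 and c = \<xi>, which is possible because v(z) = 0 forces \<eta>0/\<xi> = -z_t/z_x; in case (ii)
  \<rho> = 0, c = \<eta>0 and \<phi> = 1. On \<Delta> the first prolongation coefficient is
  \<eta>1 = c (D_t \<phi> + \<lambda> (\<phi> - \<rho> x1)), so dividing v(1)(\<zeta>) = 0 by c leaves an identity in which \<lambda>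
  only occurs multiplied by (\<phi> - \<rho> x1) \<zeta>_x1. Comparing two values of w shows that \<lambda> does not
  depend on w, and the same division turns v(2)(x2 - F) = 0 into the \<lambda>-symmetry condition.
  Finally X[\<lambda>,(2)] D_t f = -\<rho> \<lambda> D_t f for the first-order invariants f = z, \<zeta>, so their quotient
  \<zeta>_z is invariant too; it is independent of z and \<zeta> because it alone involves x2.\<close>

section \<open>Partial derivatives of smooth functions\<close>

lemma smooth_has_derivative:
  assumes "smooth g"
  obtains g' where "\<And>y. (g has_derivative g' y) (at y)" "\<And>v. smooth (\<lambda>y. g' y v)"
proof -
  obtain S where S: "g \<in> S"
    "\<forall>h\<in>S. \<exists>h'. (\<forall>y. (h has_derivative h' y) (at y)) \<and> (\<forall>v. (\<lambda>y. h' y v) \<in> S)"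
    using assms unfolding smooth_def by blast
  then obtain g' where g': "\<forall>y. (g has_derivative g' y) (at y)" "\<forall>v. (\<lambda>y. g' y v) \<in> S"
    by blast
  have "smooth (\<lambda>y. g' y v)" for v
    using g'(2) S(2) unfolding smooth_def by blast
  with g' that show ?thesis by blast
qed

lemma smooth_continuous_on: "smooth g \<Longrightarrow> continuous_on UNIV g"
  by (metis smooth_has_derivative continuous_at_imp_continuous_on has_derivative_continuous)

lemma has_real_derivative_along_line:
  fixes G :: "'a::real_normed_vector \<Rightarrow> real"
  assumes "(G has_derivative G') (at (c + t *\<^sub>R e))"
  shows "((\<lambda>s. G (c + s *\<^sub>R e)) has_real_derivative G' e) (at t)"
proof -
  have "((\<lambda>s. c + s *\<^sub>R e) has_derivative (\<lambda>h. h *\<^sub>R e)) (at t)"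
    by (auto intro!: derivative_eq_intros)
  from has_derivative_compose[OF this assms]
  have "((\<lambda>s. G (c + s *\<^sub>R e)) has_derivative (\<lambda>h. G' (h *\<^sub>R e))) (at t)"
    by (simp add: o_def)
  moreover have "(\<lambda>h. G' (h *\<^sub>R e)) = (*) (G' e)"
    using has_derivative_bounded_linear[OF assms] by (auto simp: linear_simps(5) mult.commute)
  ultimately show ?thesis
    unfolding has_field_derivative_def by simp
qed

definition pt3 :: "(real \<Rightarrow> real \<Rightarrow> real \<Rightarrow> real) \<Rightarrow> real \<Rightarrow> real \<Rightarrow> real \<Rightarrow> real" where
  "pt3 g t x p = deriv (\<lambda>s. g s x p) t"
definition px3 :: "(real \<Rightarrow> real \<Rightarrow> real \<Rightarrow> real) \<Rightarrow> real \<Rightarrow> real \<Rightarrow> real \<Rightarrow> real" where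
  "px3 g t x p = deriv (\<lambda>s. g t s p) x"
definition pp3 :: "(real \<Rightarrow> real \<Rightarrow> real \<Rightarrow> real) \<Rightarrow> real \<Rightarrow> real \<Rightarrow> real \<Rightarrow> real" where
  "pp3 g t x p = deriv (\<lambda>s. g t x s) p"
definition pt2 :: "(real \<Rightarrow> real \<Rightarrow> real) \<Rightarrow> real \<Rightarrow> real \<Rightarrow> real" where
  "pt2 g t x = deriv (\<lambda>s. g s x) t"
definition px2 :: "(real \<Rightarrow> real \<Rightarrow> real) \<Rightarrow> real \<Rightarrow> real \<Rightarrow> real" where
  "px2 g t x = deriv (\<lambda>s. g t s) x"

definition has_partials4 :: "(real \<Rightarrow> real \<Rightarrow> real \<Rightarrow> real \<Rightarrow> real) \<Rightarrow> bool" where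
  "has_partials4 g \<longleftrightarrow> (\<forall>t x p w. ((\<lambda>s. g s x p w) has_real_derivative pt4 g t x p w) (at t)
     \<and> ((\<lambda>s. g t s p w) has_real_derivative px4 g t x p w) (at x)
     \<and> ((\<lambda>s. g t x s w) has_real_derivative pp4 g t x p w) (at p)
     \<and> ((\<lambda>s. g t x p s) has_real_derivative pw4 g t x p w) (at w))"

definition has_partials3 :: "(real \<Rightarrow> real \<Rightarrow> real \<Rightarrow> real) \<Rightarrow> bool" where
  "has_partials3 g \<longleftrightarrow> (\<forall>t x p. ((\<lambda>s. g s x p) has_real_derivative pt3 g t x p) (at t)
     \<and> ((\<lambda>s. g t s p) has_real_derivative px3 g t x p) (at x)
     \<and> ((\<lambda>s. g t x s) has_real_derivative pp3 g t x p) (at p))"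

definition has_partials2 :: "(real \<Rightarrow> real \<Rightarrow> real) \<Rightarrow> bool" where
  "has_partials2 g \<longleftrightarrow> (\<forall>t x. ((\<lambda>s. g s x) has_real_derivative pt2 g t x) (at t)
     \<and> ((\<lambda>s. g t s) has_real_derivative px2 g t x) (at x))"

lemma has_partials4D:
  assumes "has_partials4 g"
  shows "((\<lambda>s. g s x p w) has_real_derivative pt4 g t x p w) (at t)"
    "((\<lambda>s. g t s p w) has_real_derivative px4 g t x p w) (at x)"
    "((\<lambda>s. g t x s w) has_real_derivative pp4 g t x p w) (at p)"
    "((\<lambda>s. g t x p s) has_real_derivative pw4 g t x p w) (at w)"
  using assms unfolding has_partials4_def by blast+

lemma has_partials3D:
  assumes "has_partials3 g"
  shows "((\<lambda>s. g s x p) has_real_derivative pt3 g t x p) (at t)"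
    "((\<lambda>s. g t s p) has_real_derivative px3 g t x p) (at x)"
    "((\<lambda>s. g t x s) has_real_derivative pp3 g t x p) (at p)"
  using assms unfolding has_partials3_def by blast+

lemma has_partials2D:
  assumes "has_partials2 g"
  shows "((\<lambda>s. g s x) has_real_derivative pt2 g t x) (at t)"
    "((\<lambda>s. g t s) has_real_derivative px2 g t x) (at x)"
  using assms unfolding has_partials2_def by blast+

lemma has_partials3I:
  assumes "\<And>t x p. (\<lambda>s. g s x p) differentiable (at t)"
    "\<And>t x p. (\<lambda>s. g t s p) differentiable (at x)"
    "\<And>t x p. (\<lambda>s. g t x s) differentiable (at p)"
  shows "has_partials3 g"
  unfolding has_partials3_def pt3_def px3_def pp3_def
  using assms DERIV_deriv_iff_real_differentiable by blast

lemma has_partials2I: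
  assumes "\<And>t x. (\<lambda>s. g s x) differentiable (at t)"
    "\<And>t x. (\<lambda>s. g t s) differentiable (at x)"
  shows "has_partials2 g"
  unfolding has_partials2_def pt2_def px2_def
  using assms DERIV_deriv_iff_real_differentiable by blast

lemma smooth4_partials:
  assumes "smooth4 g"
  shows "has_partials4 g" "smooth4 (pt4 g)" "smooth4 (px4 g)" "smooth4 (pp4 g)" "smooth4 (pw4 g)"
proof -
  let ?G = "\<lambda>(a::real, b::real, c::real, d::real). g a b c d"
  obtain G' where G': "\<And>y. (?G has_derivative G' y) (at y)" "\<And>v. smooth (\<lambda>y. G' y v)"
    using smooth_has_derivative assms unfolding smooth4_def by blast
  have d1: "((\<lambda>s. g s x p w) has_real_derivative G' (t,x,p,w) (1,0,0,0)) (at t)" for t x p w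
    using has_real_derivative_along_line[of ?G _ "(0,x,p,w)" t "(1,0,0,0)"] G'(1) by simp
  have d2: "((\<lambda>s. g t s p w) has_real_derivative G' (t,x,p,w) (0,1,0,0)) (at x)" for t x p w
    using has_real_derivative_along_line[of ?G _ "(t,0,p,w)" x "(0,1,0,0)"] G'(1) by simp
  have d3: "((\<lambda>s. g t x s w) has_real_derivative G' (t,x,p,w) (0,0,1,0)) (at p)" for t x p w
    using has_real_derivative_along_line[of ?G _ "(t,x,0,w)" p "(0,0,1,0)"] G'(1) by simp
  have d4: "((\<lambda>s. g t x p s) has_real_derivative G' (t,x,p,w) (0,0,0,1)) (at w)" for t x p w
    using has_real_derivative_along_line[of ?G _ "(t,x,p,0)" w "(0,0,0,1)"] G'(1) by simp
  have e: "pt4 g = (\<lambda>t x p w. G' (t,x,p,w) (1,0,0,0))" "px4 g = (\<lambda>t x p w. G' (t,x,p,w) (0,1,0,0))"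
    "pp4 g = (\<lambda>t x p w. G' (t,x,p,w) (0,0,1,0))" "pw4 g = (\<lambda>t x p w. G' (t,x,p,w) (0,0,0,1))"
    unfolding pt4_def px4_def pp4_def pw4_def using d1 d2 d3 d4 by (auto simp: fun_eq_iff intro: DERIV_imp_deriv)
  show "has_partials4 g" unfolding has_partials4_def e using d1 d2 d3 d4 by blast
  have "smooth4 (\<lambda>t x p w. G' (t,x,p,w) v)" for v
    unfolding smooth4_def using G'(2)[of v] by (simp add: case_prod_beta')
  then show "smooth4 (pt4 g)" "smooth4 (px4 g)" "smooth4 (pp4 g)" "smooth4 (pw4 g)"
    unfolding e by blast+
qed

lemma smooth3_partials:
  assumes "smooth3 g"
  shows "has_partials3 g" "smooth3 (pt3 g)" "smooth3 (px3 g)" "smooth3 (pp3 g)"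
    "continuous_on UNIV (\<lambda>(a,b,c). g a b c)"
proof -
  let ?G = "\<lambda>(a::real, b::real, c::real). g a b c"
  show "continuous_on UNIV ?G" using smooth_continuous_on assms unfolding smooth3_def by blast
  obtain G' where G': "\<And>y. (?G has_derivative G' y) (at y)" "\<And>v. smooth (\<lambda>y. G' y v)"
    using smooth_has_derivative assms unfolding smooth3_def by blast
  have d1: "((\<lambda>s. g s x p) has_real_derivative G' (t,x,p) (1,0,0)) (at t)" for t x p
    using has_real_derivative_along_line[of ?G _ "(0,x,p)" t "(1,0,0)"] G'(1) by simp
  have d2: "((\<lambda>s. g t s p) has_real_derivative G' (t,x,p) (0,1,0)) (at x)" for t x p
    using has_real_derivative_along_line[of ?G _ "(t,0,p)" x "(0,1,0)"] G'(1) by simp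
  have d3: "((\<lambda>s. g t x s) has_real_derivative G' (t,x,p) (0,0,1)) (at p)" for t x p
    using has_real_derivative_along_line[of ?G _ "(t,x,0)" p "(0,0,1)"] G'(1) by simp
  have e: "pt3 g = (\<lambda>t x p. G' (t,x,p) (1,0,0))" "px3 g = (\<lambda>t x p. G' (t,x,p) (0,1,0))"
    "pp3 g = (\<lambda>t x p. G' (t,x,p) (0,0,1))"
    unfolding pt3_def px3_def pp3_def using d1 d2 d3 by (auto simp: fun_eq_iff intro: DERIV_imp_deriv)
  show "has_partials3 g" unfolding has_partials3_def e using d1 d2 d3 by blast
  have "smooth3 (\<lambda>t x p. G' (t,x,p) v)" for v
    unfolding smooth3_def using G'(2)[of v] by (simp add: case_prod_beta')
  then show "smooth3 (pt3 g)" "smooth3 (px3 g)" "smooth3 (pp3 g)"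
    unfolding e by blast+
qed

lemma smooth2_partials:
  assumes "smooth2 g"
  shows "has_partials2 g" "smooth2 (pt2 g)" "smooth2 (px2 g)"
    "continuous_on UNIV (\<lambda>(a,b). g a b)"
proof -
  let ?G = "\<lambda>(a::real, b::real). g a b"
  show "continuous_on UNIV ?G" using smooth_continuous_on assms unfolding smooth2_def by blast
  obtain G' where G': "\<And>y. (?G has_derivative G' y) (at y)" "\<And>v. smooth (\<lambda>y. G' y v)"
    using smooth_has_derivative assms unfolding smooth2_def by blast
  have d1: "((\<lambda>s. g s x) has_real_derivative G' (t,x) (1,0)) (at t)" for t x
    using has_real_derivative_along_line[of ?G _ "(0,x)" t "(1,0)"] G'(1) by simp
  have d2: "((\<lambda>s. g t s) has_real_derivative G' (t,x) (0,1)) (at x)" for t x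
    using has_real_derivative_along_line[of ?G _ "(t,0)" x "(0,1)"] G'(1) by simp
  have e: "pt2 g = (\<lambda>t x. G' (t,x) (1,0))" "px2 g = (\<lambda>t x. G' (t,x) (0,1))"
    unfolding pt2_def px2_def using d1 d2 by (auto simp: fun_eq_iff intro: DERIV_imp_deriv)
  show "has_partials2 g" unfolding has_partials2_def e using d1 d2 by blast
  have "smooth2 (\<lambda>t x. G' (t,x) v)" for v
    unfolding smooth2_def using G'(2)[of v] by (simp add: case_prod_beta')
  then show "smooth2 (pt2 g)" "smooth2 (px2 g)"
    unfolding e by blast+
qed

lemma has_partials2_const: "has_partials2 (\<lambda>t x. k)" "pt2 (\<lambda>t x. k) = (\<lambda>t x. 0)" "px2 (\<lambda>t x. k) = (\<lambda>t x. 0)"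
  by (simp_all add: has_partials2_def pt2_def px2_def fun_eq_iff)

lemma has_real_derivative_of_zero:
  assumes "\<And>s. f s = (0::real)" and "(f has_real_derivative D) (at x)"
  shows "D = 0"
proof -
  have "f = (\<lambda>s. 0)" using assms(1) by auto
  then show ?thesis using assms(2) DERIV_const DERIV_unique by metis
qed

lemma continuous_eq_off_point:
  fixes f g :: "real \<Rightarrow> real"
  assumes "isCont f p" "isCont g p" and "\<And>q. q \<noteq> p \<Longrightarrow> f q = g q"
  shows "f p = g p"
proof -
  have "eventually (\<lambda>q. f q = g q) (at p)"
    using assms(3) by (auto simp: eventually_at_filter)
  with assms(1) have "(g \<longlongrightarrow> f p) (at p)"
    unfolding isCont_def by (rule Lim_transform_eventually)
  with assms(2) show ?thesis
    unfolding isCont_def using tendsto_unique at_neq_bot by blast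
qed

section \<open>Symmetry of mixed second partials\<close>

lemma continuous_on_UNIV_box:
  fixes f :: "real \<Rightarrow> real \<Rightarrow> real"
  assumes "continuous_on UNIV (\<lambda>(x,y). f x y)" "e > 0"
  obtains d where "d > 0" "\<And>x y. \<bar>x - a\<bar> < d \<Longrightarrow> \<bar>y - b\<bar> < d \<Longrightarrow> \<bar>f x y - f a b\<bar> < e"
proof -
  obtain \<delta> where \<delta>: "\<delta> > 0"
    "\<And>u. dist u (a,b) < \<delta> \<Longrightarrow> dist ((\<lambda>(x,y). f x y) u) ((\<lambda>(x,y). f x y) (a,b)) < e"
    using assms unfolding continuous_on_iff by (meson UNIV_I)
  have "\<bar>f x y - f a b\<bar> < e" if "\<bar>x - a\<bar> < \<delta>/2" "\<bar>y - b\<bar> < \<delta>/2" for x y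
  proof -
    have "dist (x,y) (a,b) = sqrt ((dist x a)\<^sup>2 + (dist y b)\<^sup>2)" by (simp add: dist_Pair_Pair)
    also have "\<dots> \<le> \<bar>dist x a\<bar> + \<bar>dist y b\<bar>" by (rule sqrt_sum_squares_le_sum_abs)
    also have "\<dots> < \<delta>" using that by (simp add: dist_real_def)
    finally show ?thesis using \<delta>(2) by (fastforce simp: dist_real_def)
  qed
  with \<delta>(1) that[of "\<delta>/2"] show ?thesis by simp
qed

lemma mixed_partials_commute:
  fixes G G1 G2 G12 G21 :: "real \<Rightarrow> real \<Rightarrow> real"
  assumes d1: "\<And>a b. ((\<lambda>s. G s b) has_real_derivative G1 a b) (at a)"
    and d2: "\<And>a b. ((\<lambda>s. G a s) has_real_derivative G2 a b) (at b)"
    and d12: "\<And>a b. ((\<lambda>s. G1 a s) has_real_derivative G12 a b) (at b)"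
    and d21: "\<And>a b. ((\<lambda>s. G2 s b) has_real_derivative G21 a b) (at a)"
    and c12: "continuous_on UNIV (\<lambda>(a,b). G12 a b)"
    and c21: "continuous_on UNIV (\<lambda>(a,b). G21 a b)"
  shows "G12 a b = G21 a b"
proof (rule ccontr)
  assume ne: "G12 a b \<noteq> G21 a b"
  define e where "e = \<bar>G12 a b - G21 a b\<bar> / 2"
  have e: "e > 0" using ne by (simp add: e_def)
  obtain \<delta>1 where \<delta>1: "\<delta>1 > 0"
    "\<And>x y. \<bar>x - a\<bar> < \<delta>1 \<Longrightarrow> \<bar>y - b\<bar> < \<delta>1 \<Longrightarrow> \<bar>G12 x y - G12 a b\<bar> < e"
    using continuous_on_UNIV_box[OF c12 e] by blast
  obtain \<delta>2 where \<delta>2: "\<delta>2 > 0"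
    "\<And>x y. \<bar>x - a\<bar> < \<delta>2 \<Longrightarrow> \<bar>y - b\<bar> < \<delta>2 \<Longrightarrow> \<bar>G21 x y - G21 a b\<bar> < e"
    using continuous_on_UNIV_box[OF c21 e] by blast
  define h where "h = min \<delta>1 \<delta>2 / 2"
  have h: "h > 0" "h < \<delta>1" "h < \<delta>2" using \<delta>1 \<delta>2 by (auto simp: h_def)
  text \<open>The second difference over the square of side h, by the mean value theorem in either order.\<close>
  obtain c1 where c1: "a < c1" "c1 < a + h"
    "(G (a+h) (b+h) - G (a+h) b) - (G a (b+h) - G a b) = (a + h - a) * (G1 c1 (b+h) - G1 c1 b)"
    using MVT2[of a "a+h" "\<lambda>s. G s (b+h) - G s b" "\<lambda>s. G1 s (b+h) - G1 s b",
        OF _ DERIV_diff[OF d1 d1]] h by auto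
  obtain c2 where c2: "b < c2" "c2 < b + h" "G1 c1 (b+h) - G1 c1 b = (b + h - b) * G12 c1 c2"
    using MVT2[of b "b+h" "\<lambda>s. G1 c1 s" "\<lambda>s. G12 c1 s"] h d12 by auto
  obtain e2 where e2: "b < e2" "e2 < b + h"
    "(G (a+h) (b+h) - G a (b+h)) - (G (a+h) b - G a b) = (b + h - b) * (G2 (a+h) e2 - G2 a e2)"
    using MVT2[of b "b+h" "\<lambda>s. G (a+h) s - G a s" "\<lambda>s. G2 (a+h) s - G2 a s",
        OF _ DERIV_diff[OF d2 d2]] h by auto
  obtain e1 where e1: "a < e1" "e1 < a + h" "G2 (a+h) e2 - G2 a e2 = (a + h - a) * G21 e1 e2"
    using MVT2[of a "a+h" "\<lambda>s. G2 s e2" "\<lambda>s. G21 s e2"] h d21 by auto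
  have "h * (h * G12 c1 c2) = h * (h * G21 e1 e2)"
    using c1(3) c2(3) e2(3) e1(3) by (simp add: algebra_simps)
  hence eq: "G12 c1 c2 = G21 e1 e2" using h by simp
  have "\<bar>G12 c1 c2 - G12 a b\<bar> < e" using \<delta>1(2) c1 c2 h by auto
  moreover have "\<bar>G21 e1 e2 - G21 a b\<bar> < e" using \<delta>2(2) e1 e2 h by auto
  ultimately have "\<bar>G12 a b - G21 a b\<bar> < 2 * e" using eq by linarith
  thus False by (simp add: e_def)
qed

lemma continuous_on_fix_coordinate:
  fixes g :: "real \<Rightarrow> real \<Rightarrow> real \<Rightarrow> real"
  assumes "continuous_on UNIV (\<lambda>(a,b,c). g a b c)"
  shows "continuous_on UNIV (\<lambda>(a,b). g a b c0)" "continuous_on UNIV (\<lambda>(a,b). g a b0 b)"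
    "continuous_on UNIV (\<lambda>(a,b). g a0 a b)"
proof -
  have c: "continuous_on UNIV (\<lambda>u::real\<times>real\<times>real. g (fst u) (fst (snd u)) (snd (snd u)))"
    using assms by (simp add: case_prod_beta')
  have "continuous_on UNIV ((\<lambda>u. g (fst u) (fst (snd u)) (snd (snd u))) \<circ> (\<lambda>u. (fst u, snd u, c0)))"
    "continuous_on UNIV ((\<lambda>u. g (fst u) (fst (snd u)) (snd (snd u))) \<circ> (\<lambda>u. (fst u, b0, snd u)))"
    "continuous_on UNIV ((\<lambda>u. g (fst u) (fst (snd u)) (snd (snd u))) \<circ> (\<lambda>u. (a0, fst u, snd u)))"
    by (intro continuous_on_compose continuous_intros continuous_on_subset[OF c]; simp)+
  then show "continuous_on UNIV (\<lambda>(a,b). g a b c0)" "continuous_on UNIV (\<lambda>(a,b). g a b0 b)"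
    "continuous_on UNIV (\<lambda>(a,b). g a0 a b)"
    by (simp_all add: o_def case_prod_beta')
qed

lemma smooth3_mixed_partials:
  assumes "smooth3 g"
  shows "px3 (pt3 g) t x p = pt3 (px3 g) t x p"
    "pp3 (pt3 g) t x p = pt3 (pp3 g) t x p"
    "pp3 (px3 g) t x p = px3 (pp3 g) t x p"
proof -
  have d: "has_partials3 g" "has_partials3 (pt3 g)" "has_partials3 (px3 g)" "has_partials3 (pp3 g)"
    using smooth3_partials assms by blast+
  have c: "continuous_on UNIV (\<lambda>(a,b,c). px3 (pt3 g) a b c)" "continuous_on UNIV (\<lambda>(a,b,c). pt3 (px3 g) a b c)"
     "continuous_on UNIV (\<lambda>(a,b,c). pp3 (pt3 g) a b c)" "continuous_on UNIV (\<lambda>(a,b,c). pt3 (pp3 g) a b c)"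
     "continuous_on UNIV (\<lambda>(a,b,c). pp3 (px3 g) a b c)" "continuous_on UNIV (\<lambda>(a,b,c). px3 (pp3 g) a b c)"
    using smooth3_partials assms by meson+
  show "px3 (pt3 g) t x p = pt3 (px3 g) t x p"
    by (rule mixed_partials_commute[of "\<lambda>a b. g a b p" "\<lambda>a b. pt3 g a b p" "\<lambda>a b. px3 g a b p"])
       (use d continuous_on_fix_coordinate(1)[OF c(1)] continuous_on_fix_coordinate(1)[OF c(2)]
         in \<open>auto simp: has_partials3_def\<close>)
  show "pp3 (pt3 g) t x p = pt3 (pp3 g) t x p"
    by (rule mixed_partials_commute[of "\<lambda>a b. g a x b" "\<lambda>a b. pt3 g a x b" "\<lambda>a b. pp3 g a x b"])
       (use d continuous_on_fix_coordinate(2)[OF c(3)] continuous_on_fix_coordinate(2)[OF c(4)]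
         in \<open>auto simp: has_partials3_def\<close>)
  show "pp3 (px3 g) t x p = px3 (pp3 g) t x p"
    by (rule mixed_partials_commute[of "\<lambda>a b. g t a b" "\<lambda>a b. px3 g t a b" "\<lambda>a b. pp3 g t a b"])
       (use d continuous_on_fix_coordinate(3)[OF c(5)] continuous_on_fix_coordinate(3)[OF c(6)]
         in \<open>auto simp: has_partials3_def\<close>)
qed

lemma smooth2_mixed_partials:
  assumes "smooth2 g"
  shows "px2 (pt2 g) t x = pt2 (px2 g) t x"
proof -
  have "has_partials2 g" "has_partials2 (pt2 g)" "has_partials2 (px2 g)"
    "continuous_on UNIV (\<lambda>(a,b). px2 (pt2 g) a b)" "continuous_on UNIV (\<lambda>(a,b). pt2 (px2 g) a b)"
    using smooth2_partials assms by meson+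
  then show ?thesis
    by (intro mixed_partials_commute[of g "pt2 g" "px2 g"]) (auto simp: has_partials2_def)
qed

section \<open>Total derivatives and prolongations in coordinates\<close>

lemma sum_atMost_2: "(\<Sum>i\<le>(2::nat). f i) = f 0 + f 1 + (f 2 :: real)"
  by (simp add: numeral_2_eq_2)

lemma sum_lessThan_3: "(\<Sum>i<(3::nat). f i) = f 0 + f 1 + (f 2 :: real)"
  by (simp add: numeral_3_eq_3 numeral_2_eq_2)

lemma wpd_explicit:
  assumes f: "\<And>t X W. f t X W = g t (X 0) (X 1) (X 2) (W 0) (W 1)"
    and dt: "((\<lambda>s. g s (X 0) (X 1) (X 2) (W 0) (W 1)) has_real_derivative gt) (at t)"
    and d0: "((\<lambda>s. g t s (X 1) (X 2) (W 0) (W 1)) has_real_derivative g0) (at (X 0))"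
    and d1: "((\<lambda>s. g t (X 0) s (X 2) (W 0) (W 1)) has_real_derivative g1) (at (X 1))"
    and d2: "((\<lambda>s. g t (X 0) (X 1) s (W 0) (W 1)) has_real_derivative g2) (at (X 2))"
    and e0: "((\<lambda>s. g t (X 0) (X 1) (X 2) s (W 1)) has_real_derivative h0) (at (W 0))"
    and e1: "((\<lambda>s. g t (X 0) (X 1) (X 2) (W 0) s) has_real_derivative h1) (at (W 1))"
  shows "wpd_t f t X W = gt" "wpd_x 0 f t X W = g0" "wpd_x 1 f t X W = g1" "wpd_x 2 f t X W = g2"
    "wpd_w 0 f t X W = h0" "wpd_w 1 f t X W = h1"
    "\<And>i. i \<ge> 3 \<Longrightarrow> wpd_x i f t X W = 0" "\<And>i. i \<ge> 2 \<Longrightarrow> wpd_w i f t X W = 0"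
  using DERIV_imp_deriv[OF dt] DERIV_imp_deriv[OF d0] DERIV_imp_deriv[OF d1]
    DERIV_imp_deriv[OF d2] DERIV_imp_deriv[OF e0] DERIV_imp_deriv[OF e1]
  by (simp_all add: wpd_t_def wpd_x_def wpd_w_def f)

lemma totDw_explicit:
  assumes f: "\<And>t X W. f t X W = g t (X 0) (X 1) (X 2) (W 0) (W 1)"
    and dt: "((\<lambda>s. g s (X 0) (X 1) (X 2) (W 0) (W 1)) has_real_derivative gt) (at t)"
    and d0: "((\<lambda>s. g t s (X 1) (X 2) (W 0) (W 1)) has_real_derivative g0) (at (X 0))"
    and d1: "((\<lambda>s. g t (X 0) s (X 2) (W 0) (W 1)) has_real_derivative g1) (at (X 1))"
    and d2: "((\<lambda>s. g t (X 0) (X 1) s (W 0) (W 1)) has_real_derivative g2) (at (X 2))"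
    and e0: "((\<lambda>s. g t (X 0) (X 1) (X 2) s (W 1)) has_real_derivative h0) (at (W 0))"
    and e1: "((\<lambda>s. g t (X 0) (X 1) (X 2) (W 0) s) has_real_derivative h1) (at (W 1))"
  shows "totDw f t X W = gt + X 1 * g0 + X 2 * g1 + X 3 * g2 + W 1 * h0 + W 2 * h1"
proof -
  note w = wpd_explicit[of f g, OF f dt d0 d1 d2 e0 e1]
  let ?a = "\<lambda>i. X (Suc i) * wpd_x i f t X W + W (Suc i) * wpd_w i f t X W"
  have "suminf ?a = sum ?a {..<3}"
    by (rule suminf_finite) (auto simp: w(7,8))
  also have "\<dots> = X 1 * g0 + X 2 * g1 + X 3 * g2 + W 1 * h0 + W 2 * h1"
    using w(2-6) w(8)[of 2] by (simp add: sum_lessThan_3 eval_nat_numeral)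
  finally show ?thesis unfolding totDw_def w(1) by simp
qed

lemma pd_explicit:
  assumes f: "\<And>t X. f t X = g t (X 0) (X 1) (X 2)"
    and dt: "((\<lambda>s. g s (X 0) (X 1) (X 2)) has_real_derivative gt) (at t)"
    and d0: "((\<lambda>s. g t s (X 1) (X 2)) has_real_derivative g0) (at (X 0))"
    and d1: "((\<lambda>s. g t (X 0) s (X 2)) has_real_derivative g1) (at (X 1))"
    and d2: "((\<lambda>s. g t (X 0) (X 1) s) has_real_derivative g2) (at (X 2))"
  shows "pd_t f t X = gt" "pd_x 0 f t X = g0" "pd_x 1 f t X = g1" "pd_x 2 f t X = g2"
    "\<And>i. i \<ge> 3 \<Longrightarrow> pd_x i f t X = 0"
  using DERIV_imp_deriv[OF dt] DERIV_imp_deriv[OF d0] DERIV_imp_deriv[OF d1] DERIV_imp_deriv[OF d2]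
  by (simp_all add: pd_t_def pd_x_def f)

lemma totD_explicit:
  assumes f: "\<And>t X. f t X = g t (X 0) (X 1) (X 2)"
    and dt: "((\<lambda>s. g s (X 0) (X 1) (X 2)) has_real_derivative gt) (at t)"
    and d0: "((\<lambda>s. g t s (X 1) (X 2)) has_real_derivative g0) (at (X 0))"
    and d1: "((\<lambda>s. g t (X 0) s (X 2)) has_real_derivative g1) (at (X 1))"
    and d2: "((\<lambda>s. g t (X 0) (X 1) s) has_real_derivative g2) (at (X 2))"
  shows "totD f t X = gt + X 1 * g0 + X 2 * g1 + X 3 * g2"
proof -
  note w = pd_explicit[of f g, OF f dt d0 d1 d2]
  let ?a = "\<lambda>i. X (Suc i) * pd_x i f t X"
  have "suminf ?a = sum ?a {..<3}"
    by (rule suminf_finite) (auto simp: w(5))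
  also have "\<dots> = X 1 * g0 + X 2 * g1 + X 3 * g2"
    using w(2-4) by (simp add: sum_lessThan_3 eval_nat_numeral)
  finally show ?thesis unfolding totD_def w(1) by simp
qed

lemma eta_prol_1: "eta_prol a b 1 = (\<lambda>t X W. totDw b t X W - totDw a t X W * X 1)"
  using eta_prol.simps(2)[of a b 0] by simp

lemma eta_prol_2: "eta_prol a b 2 = (\<lambda>t X W. totDw (eta_prol a b 1) t X W - totDw a t X W * X 2)"
  using eta_prol.simps(2)[of a b 1] by (simp add: numeral_2_eq_2)

lemma phi_lam_1: "phi_lam r f l 1 = (\<lambda>t X. totD (lift2 f) t X - totD (lift2 r) t X * X 1
    + lift3 l t X * (lift2 f t X - r t (X 0) * X 1))"
  using phi_lam.simps(2)[of r f l 0] by simp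

lemma phi_lam_2: "phi_lam r f l 2 = (\<lambda>t X. totD (phi_lam r f l 1) t X - totD (lift2 r) t X * X 2
    + lift3 l t X * (phi_lam r f l 1 t X - r t (X 0) * X 2))"
  using phi_lam.simps(2)[of r f l 1] by (simp add: numeral_2_eq_2)

lemma prol_apply_W_free:
  assumes f: "\<And>t X W. f t X W = g t (X 0) (X 1) (X 2)"
    and dt: "((\<lambda>s. g s (X 0) (X 1) (X 2)) has_real_derivative gt) (at t)"
    and d0: "((\<lambda>s. g t s (X 1) (X 2)) has_real_derivative g0) (at (X 0))"
    and d1: "((\<lambda>s. g t (X 0) s (X 2)) has_real_derivative g1) (at (X 1))"
    and d2: "((\<lambda>s. g t (X 0) (X 1) s) has_real_derivative g2) (at (X 2))"
  shows "prol_apply xi eta psi 0 f t X W = lift4 xi t X W * gt + lift4 eta t X W * g0"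
    "prol_apply xi eta psi 1 f t X W = lift4 xi t X W * gt + lift4 eta t X W * g0
       + eta_prol (lift4 xi) (lift4 eta) 1 t X W * g1"
    "prol_apply xi eta psi 2 f t X W = lift4 xi t X W * gt + lift4 eta t X W * g0
       + eta_prol (lift4 xi) (lift4 eta) 1 t X W * g1 + eta_prol (lift4 xi) (lift4 eta) 2 t X W * g2"
proof -
  note w = wpd_explicit[where g="\<lambda>t a0 a1 a2 b0 b1. g t a0 a1 a2", OF f dt d0 d1 d2 DERIV_const DERIV_const]
  show "prol_apply xi eta psi 0 f t X W = lift4 xi t X W * gt + lift4 eta t X W * g0"
    "prol_apply xi eta psi 1 f t X W = lift4 xi t X W * gt + lift4 eta t X W * g0
       + eta_prol (lift4 xi) (lift4 eta) 1 t X W * g1"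
    "prol_apply xi eta psi 2 f t X W = lift4 xi t X W * gt + lift4 eta t X W * g0
       + eta_prol (lift4 xi) (lift4 eta) 1 t X W * g1 + eta_prol (lift4 xi) (lift4 eta) 2 t X W * g2"
    unfolding prol_apply_def sum_atMost_2 using w(1-6) by (simp_all add: w(8)[of 2])
qed

lemma lam_prol_apply_explicit:
  assumes f: "\<And>t X. f t X = g t (X 0) (X 1) (X 2)"
    and dt: "((\<lambda>s. g s (X 0) (X 1) (X 2)) has_real_derivative gt) (at t)"
    and d0: "((\<lambda>s. g t s (X 1) (X 2)) has_real_derivative g0) (at (X 0))"
    and d1: "((\<lambda>s. g t (X 0) s (X 2)) has_real_derivative g1) (at (X 1))"
    and d2: "((\<lambda>s. g t (X 0) (X 1) s) has_real_derivative g2) (at (X 2))"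
  shows "lam_prol_apply rho phi lam 2 f t X = rho t (X 0) * gt + phi t (X 0) * g0
       + phi_lam rho phi lam 1 t X * g1 + phi_lam rho phi lam 2 t X * g2"
  using pd_explicit[of f g, OF f dt d0 d1 d2]
  unfolding lam_prol_apply_def sum_atMost_2 by (simp add: lift2_def)

section \<open>Points of \<Delta>\<close>

definition depends_upto :: "nat \<Rightarrow> nat \<Rightarrow> wjet_fun \<Rightarrow> bool" where
  "depends_upto n m f \<longleftrightarrow> (\<forall>t X W X' W'. (\<forall>i\<le>n. X i = X' i) \<longrightarrow> (\<forall>i\<le>m. W i = W' i)
     \<longrightarrow> f t X W = f t X' W')"

lemma depends_uptoD:
  "depends_upto n m f \<Longrightarrow> \<forall>i\<le>n. X i = X' i \<Longrightarrow> \<forall>i\<le>m. W i = W' i \<Longrightarrow> f t X W = f t X' W'"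
  unfolding depends_upto_def by blast

lemma depends_upto_wpd_x:
  assumes "depends_upto n m f" and that: "\<forall>j\<le>n. X j = X' j" "\<forall>j\<le>m. W j = W' j"
  shows "wpd_x i f t X W = (if i \<le> n then wpd_x i f t X' W' else 0)"
proof (cases "i \<le> n")
  case True
  have "\<forall>j\<le>n. (X(i:=s)) j = (X'(i:=s)) j" for s
    using that by simp
  then have "f t (X(i:=s)) W = f t (X'(i:=s)) W'" for s
    using assms that(2) unfolding depends_upto_def by blast
  then have "(\<lambda>s. f t (X(i:=s)) W) = (\<lambda>s. f t (X'(i:=s)) W')" by (rule ext)
  moreover have "X i = X' i" using True that(1) by blast
  ultimately show ?thesis using True unfolding wpd_x_def by simp
next
  case False
  then have "\<forall>j\<le>n. (X(i:=s)) j = X j" for s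
    by simp
  then have "f t (X(i:=s)) W = f t X W" for s
    using assms unfolding depends_upto_def by blast
  then show ?thesis using False unfolding wpd_x_def by simp
qed

lemma depends_upto_wpd_w:
  assumes "depends_upto n m f" and that: "\<forall>j\<le>n. X j = X' j" "\<forall>j\<le>m. W j = W' j"
  shows "wpd_w i f t X W = (if i \<le> m then wpd_w i f t X' W' else 0)"
proof (cases "i \<le> m")
  case True
  have "\<forall>j\<le>m. (W(i:=s)) j = (W'(i:=s)) j" for s
    using that by simp
  then have "f t X (W(i:=s)) = f t X' (W'(i:=s))" for s
    using assms that(1) unfolding depends_upto_def by blast
  then have "(\<lambda>s. f t X (W(i:=s))) = (\<lambda>s. f t X' (W'(i:=s)))" by (rule ext)
  moreover have "W i = W' i" using True that(2) by blast
  ultimately show ?thesis using True unfolding wpd_w_def by simp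
next
  case False
  then have "\<forall>j\<le>m. (W(i:=s)) j = W j" for s
    by simp
  then have "f t X (W(i:=s)) = f t X W" for s
    using assms unfolding depends_upto_def by blast
  then show ?thesis using False unfolding wpd_w_def by simp
qed

lemma depends_upto_totDw:
  assumes "depends_upto n m f"
  shows "depends_upto (Suc n) (Suc m) (totDw f)"
  unfolding depends_upto_def
proof (intro allI impI)
  fix t :: real and X W X' W' :: "nat \<Rightarrow> real"
  assume hx: "\<forall>i\<le>Suc n. X i = X' i" and hw: "\<forall>i\<le>Suc m. W i = W' i"
  then have hx': "\<forall>i\<le>n. X i = X' i" and hw': "\<forall>i\<le>m. W i = W' i" by auto
  then have hx'': "\<forall>i\<le>n. X' i = X i" and hw'': "\<forall>i\<le>m. W' i = W i" by auto
  have "(\<lambda>s. f s X W) = (\<lambda>s. f s X' W')"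
    using assms hx' hw' unfolding depends_upto_def by blast
  moreover have "X (Suc i) * wpd_x i f t X W = X' (Suc i) * wpd_x i f t X' W'" for i
    using depends_upto_wpd_x[OF assms hx' hw', of i t] depends_upto_wpd_x[OF assms hx'' hw'', of i t] hx
    by (cases "i \<le> n") simp_all
  moreover have "W (Suc i) * wpd_w i f t X W = W' (Suc i) * wpd_w i f t X' W'" for i
    using depends_upto_wpd_w[OF assms hx' hw', of i t] depends_upto_wpd_w[OF assms hx'' hw'', of i t] hw
    by (cases "i \<le> m") simp_all
  ultimately show "totDw f t X W = totDw f t X' W'"
    unfolding totDw_def wpd_t_def by simp
qed

lemma depends_upto_totDw_iterate:
  "depends_upto 1 0 f \<Longrightarrow> depends_upto (Suc k) k ((totDw ^^ k) f)"
  by (induction k) (auto intro: depends_upto_totDw)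

text \<open>Points of \<Delta> are built coordinate by coordinate: stage k fixes x0, ..., x(k+1) and w0, ..., wk.\<close>
fun Delta_stage :: "(nat \<Rightarrow> wjet_fun) \<Rightarrow> (nat \<Rightarrow> wjet_fun) \<Rightarrow> real \<Rightarrow> real \<Rightarrow> real \<Rightarrow> real \<Rightarrow> nat
    \<Rightarrow> (nat \<Rightarrow> real) \<times> (nat \<Rightarrow> real)" where
  "Delta_stage fk hk t a b c 0 =
     ((\<lambda>i. if i = 0 then a else if i = 1 then b else 0), (\<lambda>i. if i = 0 then c else 0))"
| "Delta_stage fk hk t a b c (Suc k) = (let XW = Delta_stage fk hk t a b c k in
     ((fst XW)(k+2 := fk k t (fst XW) (snd XW)), (snd XW)(k+1 := hk k t (fst XW) (snd XW))))"

lemma Delta_stage_stable: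
  "k \<le> j \<Longrightarrow> (\<forall>i\<le>Suc k. fst (Delta_stage fk hk t a b c j) i = fst (Delta_stage fk hk t a b c k) i)
      \<and> (\<forall>i\<le>k. snd (Delta_stage fk hk t a b c j) i = snd (Delta_stage fk hk t a b c k) i)"
proof (induction j)
  case (Suc j)
  show ?case
  proof (cases "k = Suc j")
    case False
    then have "k \<le> j" using Suc by simp
    with Suc.IH show ?thesis by (auto simp: Let_def)
  qed simp
qed simp

lemma solve_jet_recursion:
  assumes "\<And>k. depends_upto (Suc k) k (fk k)" and "\<And>k. depends_upto (Suc k) k (hk k)"
  obtains X W where "X 0 = a" "X 1 = b" "W 0 = c"
    "\<And>k. X (k+2) = fk k t X W" "\<And>k. W (Suc k) = hk k t X W"
proof -
  let ?S = "Delta_stage fk hk t a b c"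
  define X where "X = (\<lambda>i. fst (?S i) i)"
  define W where "W = (\<lambda>i. snd (?S i) i)"
  have X_stage: "X i = fst (?S k) i" if "i \<le> Suc k" for i k
  proof (cases "i \<le> k")
    case True then show ?thesis using Delta_stage_stable[of i k] unfolding X_def by auto
  next
    case False
    then have "i = Suc k" using that by simp
    then show ?thesis using Delta_stage_stable[of k "Suc k"] unfolding X_def by auto
  qed
  have W_stage: "W i = snd (?S k) i" if "i \<le> k" for i k
    using Delta_stage_stable[of i k] that unfolding W_def by auto
  have fk_eq: "fk k t X W = fk k t (fst (?S k)) (snd (?S k))" for k
    by (rule depends_uptoD[OF assms(1)]) (auto intro: X_stage W_stage)
  have hk_eq: "hk k t X W = hk k t (fst (?S k)) (snd (?S k))" for k
    by (rule depends_uptoD[OF assms(2)]) (auto intro: X_stage W_stage)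
  have X_next: "X (k+2) = fst (?S (Suc k)) (k+2)" for k
    using X_stage[of "k+2" "Suc k"] by simp
  have W_next: "W (Suc k) = snd (?S (Suc k)) (Suc k)" for k
    by (simp add: W_def)
  have start: "X 0 = a" "X 1 = b" "W 0 = c"
    using X_stage[of 1 0] unfolding X_def W_def by simp_all
  show ?thesis
    by (rule that[of X W]) (use start X_next W_next fk_eq hk_eq in \<open>simp_all add: Let_def\<close>)
qed

lemma Delta_through_point:
  obtains X W where "(t, X, W) \<in> Delta F H" "X 0 = a" "X 1 = b" "W 0 = c"
proof -
  have lift3w_dep: "depends_upto 1 0 (lift3w g)" for g
    unfolding depends_upto_def lift3w_def by auto
  obtain X W where XW: "X 0 = a" "X 1 = b" "W 0 = c"
    "\<And>k. X (k+2) = (totDw ^^ k) (lift3w F) t X W" "\<And>k. W (Suc k) = (totDw ^^ k) (lift3w H) t X W"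
    using solve_jet_recursion[where fk="\<lambda>k. (totDw ^^ k) (lift3w F)" and hk="\<lambda>k. (totDw ^^ k) (lift3w H)",
        OF depends_upto_totDw_iterate[OF lift3w_dep] depends_upto_totDw_iterate[OF lift3w_dep],
        of a b c t]
    by blast
  then have "(t, X, W) \<in> Delta F H"
    unfolding Delta_def by simp
  from this XW(1-3) show ?thesis by (rule that)
qed

lemma totDw_lift3w:
  assumes "has_partials3 g"
  shows "totDw (lift3w g) t X W = pt3 g t (X 0) (X 1) + X 1 * px3 g t (X 0) (X 1) + X 2 * pp3 g t (X 0) (X 1)"
proof -
  have "totDw (lift3w g) t X W = pt3 g t (X 0) (X 1) + X 1 * px3 g t (X 0) (X 1)
      + X 2 * pp3 g t (X 0) (X 1) + X 3 * 0 + W 1 * 0 + W 2 * 0"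
    by (rule totDw_explicit[where g="\<lambda>t a0 a1 a2 b0 b1. g t a0 a1"])
       (auto simp: lift3w_def intro!: has_partials3D[OF assms] DERIV_const)
  then show ?thesis by simp
qed

lemma Delta_explicit:
  assumes "has_partials3 F" "has_partials3 H" and "(t, X, W) \<in> Delta F H"
  shows "X 2 = F t (X 0) (X 1)" "W 1 = H t (X 0) (X 1)"
    "X 3 = pt3 F t (X 0) (X 1) + X 1 * px3 F t (X 0) (X 1) + X 2 * pp3 F t (X 0) (X 1)"
    "W 2 = pt3 H t (X 0) (X 1) + X 1 * px3 H t (X 0) (X 1) + X 2 * pp3 H t (X 0) (X 1)"
proof -
  have "X (k + 2) = (totDw ^^ k) (lift3w F) t X W" "W (Suc k) = (totDw ^^ k) (lift3w H) t X W" for k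
    using assms(3) unfolding Delta_def by auto
  from this[of 0] this[of 1] show "X 2 = F t (X 0) (X 1)" "W 1 = H t (X 0) (X 1)"
    "X 3 = pt3 F t (X 0) (X 1) + X 1 * px3 F t (X 0) (X 1) + X 2 * pp3 F t (X 0) (X 1)"
    "W 2 = pt3 H t (X 0) (X 1) + X 1 * px3 H t (X 0) (X 1) + X 2 * pp3 H t (X 0) (X 1)"
    by (simp_all add: lift3w_def numeral_3_eq_3 numeral_2_eq_2 totDw_lift3w[OF assms(1)] totDw_lift3w[OF assms(2)])
qed

section \<open>Prolongations of lifted functions\<close>

lemma prol_apply_0_lift2w:
  assumes "has_partials2 g"
  shows "prol_apply xi eta psi 0 (lift2w g) t X W
    = lift4 xi t X W * pt2 g t (X 0) + lift4 eta t X W * px2 g t (X 0)"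
  by (rule prol_apply_W_free(1)[where g="\<lambda>t a0 a1 a2. g t a0"])
     (auto simp: lift2w_def intro!: has_partials2D[OF assms] DERIV_const)

lemma prol_apply_1_lift3w:
  assumes "has_partials3 g"
  shows "prol_apply xi eta psi 1 (lift3w g) t X W
    = lift4 xi t X W * pt3 g t (X 0) (X 1) + lift4 eta t X W * px3 g t (X 0) (X 1)
      + eta_prol (lift4 xi) (lift4 eta) 1 t X W * pp3 g t (X 0) (X 1)"
  by (rule prol_apply_W_free(2)[where g="\<lambda>t a0 a1 a2. g t a0 a1"])
     (auto simp: lift3w_def intro!: has_partials3D[OF assms] DERIV_const)

lemma prol_apply_2_equation:
  assumes "has_partials3 F"
  shows "prol_apply xi eta psi 2 (\<lambda>t X W. X 2 - F t (X 0) (X 1)) t X W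
    = eta_prol (lift4 xi) (lift4 eta) 2 t X W - (lift4 xi t X W * pt3 F t (X 0) (X 1)
      + lift4 eta t X W * px3 F t (X 0) (X 1) + eta_prol (lift4 xi) (lift4 eta) 1 t X W * pp3 F t (X 0) (X 1))"
proof -
  have "prol_apply xi eta psi 2 (\<lambda>t X W. X 2 - F t (X 0) (X 1)) t X W
    = lift4 xi t X W * (- pt3 F t (X 0) (X 1)) + lift4 eta t X W * (- px3 F t (X 0) (X 1))
      + eta_prol (lift4 xi) (lift4 eta) 1 t X W * (- pp3 F t (X 0) (X 1))
      + eta_prol (lift4 xi) (lift4 eta) 2 t X W * 1"
    by (rule prol_apply_W_free(3)[where g="\<lambda>t a0 a1 a2. a2 - F t a0 a1"])
       (auto intro!: derivative_eq_intros has_partials3D[OF assms])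
  then show ?thesis by (simp add: algebra_simps)
qed

lemma lam_prol_apply_lift2:
  assumes "has_partials2 g"
  shows "lam_prol_apply rho phi lam 2 (lift2 g) t X = rho t (X 0) * pt2 g t (X 0) + phi t (X 0) * px2 g t (X 0)"
proof -
  have "lam_prol_apply rho phi lam 2 (lift2 g) t X = rho t (X 0) * pt2 g t (X 0) + phi t (X 0) * px2 g t (X 0)
      + phi_lam rho phi lam 1 t X * 0 + phi_lam rho phi lam 2 t X * 0"
    by (rule lam_prol_apply_explicit[where g="\<lambda>t a0 a1 a2. g t a0"])
       (auto simp: lift2_def intro!: has_partials2D[OF assms] DERIV_const)
  then show ?thesis by simp
qed

lemma lam_prol_apply_lift3:
  assumes "has_partials3 g"
  shows "lam_prol_apply rho phi lam 2 (lift3 g) t X = rho t (X 0) * pt3 g t (X 0) (X 1)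
    + phi t (X 0) * px3 g t (X 0) (X 1) + phi_lam rho phi lam 1 t X * pp3 g t (X 0) (X 1)"
proof -
  have "lam_prol_apply rho phi lam 2 (lift3 g) t X = rho t (X 0) * pt3 g t (X 0) (X 1)
      + phi t (X 0) * px3 g t (X 0) (X 1) + phi_lam rho phi lam 1 t X * pp3 g t (X 0) (X 1)
      + phi_lam rho phi lam 2 t X * 0"
    by (rule lam_prol_apply_explicit[where g="\<lambda>t a0 a1 a2. g t a0 a1"])
       (auto simp: lift3_def intro!: has_partials3D[OF assms] DERIV_const)
  then show ?thesis by simp
qed

lemma lam_prol_apply_equation:
  assumes "has_partials3 F"
  shows "lam_prol_apply rho phi lam 2 (\<lambda>t X. X 2 - F t (X 0) (X 1)) t X
    = phi_lam rho phi lam 2 t X - (rho t (X 0) * pt3 F t (X 0) (X 1)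
      + phi t (X 0) * px3 F t (X 0) (X 1) + phi_lam rho phi lam 1 t X * pp3 F t (X 0) (X 1))"
proof -
  have "lam_prol_apply rho phi lam 2 (\<lambda>t X. X 2 - F t (X 0) (X 1)) t X
    = rho t (X 0) * (- pt3 F t (X 0) (X 1)) + phi t (X 0) * (- px3 F t (X 0) (X 1))
      + phi_lam rho phi lam 1 t X * (- pp3 F t (X 0) (X 1)) + phi_lam rho phi lam 2 t X * 1"
    by (rule lam_prol_apply_explicit[where g="\<lambda>t a0 a1 a2. a2 - F t a0 a1"])
       (auto intro!: derivative_eq_intros has_partials3D[OF assms])
  then show ?thesis by (simp add: algebra_simps)
qed

lemma totD_lift2:
  assumes "has_partials2 g"
  shows "totD (lift2 g) t X = pt2 g t (X 0) + X 1 * px2 g t (X 0)"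
proof -
  have "totD (lift2 g) t X = pt2 g t (X 0) + X 1 * px2 g t (X 0) + X 2 * 0 + X 3 * 0"
    by (rule totD_explicit[where g="\<lambda>t a0 a1 a2. g t a0"])
       (auto simp: lift2_def intro!: has_partials2D[OF assms] DERIV_const)
  then show ?thesis by simp
qed

lemma totD_lift2_const: "totD (lift2 (\<lambda>t x. k)) t X = 0"
proof -
  have "totD (lift2 (\<lambda>t x. k)) t X = 0 + X 1 * 0 + X 2 * 0 + X 3 * 0"
    by (rule totD_explicit[where g="\<lambda>t a0 a1 a2. k"]) (auto simp: lift2_def intro!: DERIV_const)
  then show ?thesis by simp
qed

lemma totD_lift3:
  assumes "has_partials3 g"
  shows "totD (lift3 g) t X = pt3 g t (X 0) (X 1) + X 1 * px3 g t (X 0) (X 1) + X 2 * pp3 g t (X 0) (X 1)"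
proof -
  have "totD (lift3 g) t X = pt3 g t (X 0) (X 1) + X 1 * px3 g t (X 0) (X 1) + X 2 * pp3 g t (X 0) (X 1) + X 3 * 0"
    by (rule totD_explicit[where g="\<lambda>t a0 a1 a2. g t a0 a1"])
       (auto simp: lift3_def intro!: has_partials3D[OF assms] DERIV_const)
  then show ?thesis by simp
qed

lemma pd_lift2:
  "pd_t (lift2 g) t X = pt2 g t (X 0)" "pd_x 0 (lift2 g) t X = px2 g t (X 0)"
  "pd_x (Suc i) (lift2 g) t X = 0"
  by (simp_all add: pd_t_def pd_x_def lift2_def pt2_def px2_def)

lemma pd_lift3:
  "pd_t (lift3 g) t X = pt3 g t (X 0) (X 1)" "pd_x 0 (lift3 g) t X = px3 g t (X 0) (X 1)"
  "pd_x 1 (lift3 g) t X = pp3 g t (X 0) (X 1)" "pd_x (Suc (Suc i)) (lift3 g) t X = 0"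
  by (simp_all add: pd_t_def pd_x_def lift3_def pt3_def px3_def pp3_def)

lemma lam_prol_apply_divide:
  assumes f: "\<And>t X. f t X = g t (X 0) (X 1) (X 2)" and h: "\<And>t X. h t X = k t (X 0) (X 1) (X 2)"
    and gt: "((\<lambda>s. g s (X 0) (X 1) (X 2)) has_real_derivative gt) (at t)"
    and g0: "((\<lambda>s. g t s (X 1) (X 2)) has_real_derivative g0) (at (X 0))"
    and g1: "((\<lambda>s. g t (X 0) s (X 2)) has_real_derivative g1) (at (X 1))"
    and g2: "((\<lambda>s. g t (X 0) (X 1) s) has_real_derivative g2) (at (X 2))"
    and kt: "((\<lambda>s. k s (X 0) (X 1) (X 2)) has_real_derivative kt) (at t)"
    and k0: "((\<lambda>s. k t s (X 1) (X 2)) has_real_derivative k0) (at (X 0))"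
    and k1: "((\<lambda>s. k t (X 0) s (X 2)) has_real_derivative k1) (at (X 1))"
    and k2: "((\<lambda>s. k t (X 0) (X 1) s) has_real_derivative k2) (at (X 2))"
    and nonzero: "h t X \<noteq> 0"
  shows "lam_prol_apply rho phi lam 2 (\<lambda>t X. f t X / h t X) t X
    = (lam_prol_apply rho phi lam 2 f t X * h t X - f t X * lam_prol_apply rho phi lam 2 h t X) / (h t X)\<^sup>2"
proof -
  let ?G = "g t (X 0) (X 1) (X 2)" and ?K = "k t (X 0) (X 1) (X 2)"
  have K: "?K \<noteq> 0" using nonzero h by simp
  have "lam_prol_apply rho phi lam 2 (\<lambda>t X. f t X / h t X) t X
    = rho t (X 0) * ((gt * ?K - ?G * kt) / (?K * ?K)) + phi t (X 0) * ((g0 * ?K - ?G * k0) / (?K * ?K))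
      + phi_lam rho phi lam 1 t X * ((g1 * ?K - ?G * k1) / (?K * ?K))
      + phi_lam rho phi lam 2 t X * ((g2 * ?K - ?G * k2) / (?K * ?K))"
    by (rule lam_prol_apply_explicit[where g="\<lambda>t a p q. g t a p q / k t a p q"])
       (simp add: f h, (rule DERIV_divide assms K)+)
  also have "\<dots> = ((rho t (X 0) * gt + phi t (X 0) * g0 + phi_lam rho phi lam 1 t X * g1
        + phi_lam rho phi lam 2 t X * g2) * ?K
      - ?G * (rho t (X 0) * kt + phi t (X 0) * k0 + phi_lam rho phi lam 1 t X * k1
        + phi_lam rho phi lam 2 t X * k2)) / ?K\<^sup>2"
    using K by (simp add: field_simps power2_eq_square del: phi_lam.simps)
  also have "\<dots> = (lam_prol_apply rho phi lam 2 f t X * h t X - f t X * lam_prol_apply rho phi lam 2 h t X)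
      / (h t X)\<^sup>2"
    by (simp only: lam_prol_apply_explicit[OF f gt g0 g1 g2] lam_prol_apply_explicit[OF h kt k0 k1 k2] f h)
  finally show ?thesis .
qed

section \<open>Symmetries with coefficients factored through a nowhere vanishing function\<close>

locale factored_symmetry =
  fixes F H :: "real \<Rightarrow> real \<Rightarrow> real \<Rightarrow> real"
    and c xi eta psi :: "real \<Rightarrow> real \<Rightarrow> real \<Rightarrow> real \<Rightarrow> real"
    and \<rho> :: real
    and \<phi> z :: "real \<Rightarrow> real \<Rightarrow> real"
    and zeta :: "real \<Rightarrow> real \<Rightarrow> real \<Rightarrow> real"
  assumes smooth_F: "smooth3 F" and smooth_H: "smooth3 H" and smooth_c: "smooth4 c"
    and c_nonzero: "\<And>t x p w. c t x p w \<noteq> 0"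
    and smooth_z: "smooth2 z" and smooth_zeta: "smooth3 zeta"
    and xi_eq: "xi = (\<lambda>t x p w. \<rho> * c t x p w)"
    and eta_eq: "eta = (\<lambda>t x p w. \<phi> t x * c t x p w)"
    and partials_\<phi>: "has_partials2 \<phi>" "has_partials2 (pt2 \<phi>)" "has_partials2 (px2 \<phi>)"
    and symmetry: "gen_symmetry F H xi eta psi"
    and v_z: "\<And>t X W. prol_apply xi eta psi 0 (lift2w z) t X W = 0"
    and v_zeta: "\<And>t X W. (t, X, W) \<in> Delta F H \<Longrightarrow> prol_apply xi eta psi 1 (lift3w zeta) t X W = 0"
    and independent: "func_indep z zeta"
    and zeta_p_nonzero: "\<And>t X. pd_x 1 (lift3 zeta) t X \<noteq> 0"
    and nondegenerate: "\<rho> \<noteq> 0 \<or> (\<forall>t x. \<phi> t x \<noteq> 0)"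
begin

lemma partials_c: "has_partials4 c" "has_partials4 (pt4 c)" "has_partials4 (px4 c)"
  "has_partials4 (pp4 c)" "has_partials4 (pw4 c)"
  using smooth4_partials smooth_c by blast+

lemma partials_F: "has_partials3 F" and partials_H: "has_partials3 H"
  using smooth3_partials smooth_F smooth_H by blast+

lemma partials_zeta: "has_partials3 zeta" "has_partials3 (pt3 zeta)" "has_partials3 (px3 zeta)"
  "has_partials3 (pp3 zeta)"
  using smooth3_partials smooth_zeta by blast+

lemma partials_z: "has_partials2 z" "has_partials2 (pt2 z)" "has_partials2 (px2 z)"
  using smooth2_partials smooth_z by blast+

lemmas partial_derivatives = has_partials4D[OF partials_c(1)] has_partials4D[OF partials_c(2)]
  has_partials4D[OF partials_c(3)] has_partials4D[OF partials_c(4)] has_partials4D[OF partials_c(5)]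
  has_partials3D[OF partials_F] has_partials3D[OF partials_H]
  has_partials3D[OF partials_zeta(1)] has_partials3D[OF partials_zeta(2)]
  has_partials3D[OF partials_zeta(3)] has_partials3D[OF partials_zeta(4)]
  has_partials2D[OF partials_z(1)] has_partials2D[OF partials_z(2)] has_partials2D[OF partials_z(3)]
  has_partials2D[OF partials_\<phi>(1)] has_partials2D[OF partials_\<phi>(2)] has_partials2D[OF partials_\<phi>(3)]

lemma lift4_xi: "lift4 xi t X W = \<rho> * c t (X 0) (X 1) (W 0)"
  and lift4_eta: "lift4 eta t X W = \<phi> t (X 0) * c t (X 0) (X 1) (W 0)"
  by (simp_all add: lift4_def xi_eq eta_eq)

lemma z_invariant: "\<rho> * pt2 z t x + \<phi> t x * px2 z t x = 0"
proof -
  have "c t x x 0 * (\<rho> * pt2 z t x + \<phi> t x * px2 z t x) = prol_apply xi eta psi 0 (lift2w z) t (\<lambda>_. x) (\<lambda>_. 0)"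
    by (simp add: prol_apply_0_lift2w[OF partials_z(1)] lift4_xi lift4_eta algebra_simps)
  with v_z c_nonzero show ?thesis by simp
qed

abbreviation lamt :: "real \<Rightarrow> real \<Rightarrow> real \<Rightarrow> real \<Rightarrow> real" where
  "lamt \<equiv> lam_tilde c F H"

lemma c_lamt: "c t x p w * lamt t x p w
    = pt4 c t x p w + p * px4 c t x p w + pp4 c t x p w * F t x p + pw4 c t x p w * H t x p"
  unfolding lam_tilde_def using c_nonzero by simp

lemma totDw_xi: "totDw (lift4 xi) t X W = \<rho> * (pt4 c t (X 0) (X 1) (W 0) + X 1 * px4 c t (X 0) (X 1) (W 0)
      + X 2 * pp4 c t (X 0) (X 1) (W 0) + W 1 * pw4 c t (X 0) (X 1) (W 0))"
proof -
  have "totDw (lift4 xi) t X W = \<rho> * pt4 c t (X 0) (X 1) (W 0) + X 1 * (\<rho> * px4 c t (X 0) (X 1) (W 0))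
      + X 2 * (\<rho> * pp4 c t (X 0) (X 1) (W 0)) + X 3 * 0 + W 1 * (\<rho> * pw4 c t (X 0) (X 1) (W 0)) + W 2 * 0"
    by (rule totDw_explicit[where g="\<lambda>t a0 a1 a2 b0 b1. \<rho> * c t a0 a1 b0"])
       (auto simp: lift4_def xi_eq intro!: partial_derivatives derivative_eq_intros)
  then show ?thesis by (simp add: algebra_simps)
qed

lemma eta_prol_1_explicit: "eta_prol (lift4 xi) (lift4 eta) 1 t X W =
    c t (X 0) (X 1) (W 0) * (pt2 \<phi> t (X 0) + X 1 * px2 \<phi> t (X 0))
    + (\<phi> t (X 0) - \<rho> * X 1) * (pt4 c t (X 0) (X 1) (W 0) + X 1 * px4 c t (X 0) (X 1) (W 0)
      + X 2 * pp4 c t (X 0) (X 1) (W 0) + W 1 * pw4 c t (X 0) (X 1) (W 0))"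
proof -
  have "totDw (lift4 eta) t X W =
      (pt2 \<phi> t (X 0) * c t (X 0) (X 1) (W 0) + \<phi> t (X 0) * pt4 c t (X 0) (X 1) (W 0))
    + X 1 * (px2 \<phi> t (X 0) * c t (X 0) (X 1) (W 0) + \<phi> t (X 0) * px4 c t (X 0) (X 1) (W 0))
    + X 2 * (\<phi> t (X 0) * pp4 c t (X 0) (X 1) (W 0)) + X 3 * 0
    + W 1 * (\<phi> t (X 0) * pw4 c t (X 0) (X 1) (W 0)) + W 2 * 0"
    by (rule totDw_explicit[where g="\<lambda>t a0 a1 a2 b0 b1. \<phi> t a0 * c t a0 a1 b0"])
       (auto simp: lift4_def eta_eq intro!: partial_derivatives derivative_eq_intros)
  then show ?thesis unfolding eta_prol_1 totDw_xi by (simp add: algebra_simps)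
qed

lemma zeta_invariant_lamt: "\<rho> * pt3 zeta t a p + \<phi> t a * px3 zeta t a p
   + (pt2 \<phi> t a + p * px2 \<phi> t a + (\<phi> t a - \<rho> * p) * lamt t a p w) * pp3 zeta t a p = 0"
proof -
  obtain X W where XW: "(t, X, W) \<in> Delta F H" "X 0 = a" "X 1 = p" "W 0 = w"
    by (rule Delta_through_point)
  note D = Delta_explicit[OF partials_F partials_H XW(1)]
  have eta1: "eta_prol (lift4 xi) (lift4 eta) 1 t X W
      = c t a p w * (pt2 \<phi> t a + p * px2 \<phi> t a + (\<phi> t a - \<rho> * p) * lamt t a p w)"
    unfolding eta_prol_1_explicit using c_lamt[of t a p w] D(1,2) XW by (simp add: algebra_simps)
  have "c t a p w * (\<rho> * pt3 zeta t a p + \<phi> t a * px3 zeta t a p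
      + (pt2 \<phi> t a + p * px2 \<phi> t a + (\<phi> t a - \<rho> * p) * lamt t a p w) * pp3 zeta t a p)
    = prol_apply xi eta psi 1 (lift3w zeta) t X W"
    unfolding prol_apply_1_lift3w[OF partials_zeta(1)] lift4_xi lift4_eta eta1 XW(2-4)
    by (simp add: algebra_simps)
  with v_zeta[OF XW(1)] c_nonzero show ?thesis by simp
qed

definition lam :: "real \<Rightarrow> real \<Rightarrow> real \<Rightarrow> real" where
  "lam t x p = lamt t x p 0"

lemma isCont_lamt: "isCont (\<lambda>q. lamt t x q w) p"
  unfolding lam_tilde_def
  by (auto intro!: continuous_intros partial_derivatives[THEN DERIV_isCont] c_nonzero)

lemma lamt_eq_lam_generic:
  assumes "\<phi> t x - \<rho> * p \<noteq> 0"
  shows "lamt t x p w = lam t x p"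
proof -
  have "pd_x 1 (lift3 zeta) t (\<lambda>i. if i = 0 then x else p) = pp3 zeta t x p"
    using pd_lift3(3)[of zeta t "\<lambda>i. if i = 0 then x else p"] by simp
  then have "pp3 zeta t x p \<noteq> 0"
    using zeta_p_nonzero by metis
  moreover have "(\<phi> t x - \<rho> * p) * (lamt t x p w - lamt t x p 0) * pp3 zeta t x p = 0"
    using zeta_invariant_lamt[of t x p w] zeta_invariant_lamt[of t x p 0] by (simp add: algebra_simps)
  ultimately show ?thesis using assms unfolding lam_def by simp
qed

text \<open>Cancelling the factor \<phi> - \<rho> x1 leaves out the points where \<phi> = \<rho> x1; for \<rho> \<noteq> 0 these
  are isolated in x1, and continuity in x1 closes the gap.\<close>
lemma lamt_eq_lam: "lamt t x p w = lam t x p"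
proof (cases "\<phi> t x - \<rho> * p = 0")
  case True
  with nondegenerate have "\<rho> \<noteq> 0" by auto
  with True have "lamt t x q w = lamt t x q 0" if "q \<noteq> p" for q
    using that lamt_eq_lam_generic[of t x q] by (auto simp: algebra_simps lam_def)
  then have "(\<lambda>q. lamt t x q w) p = (\<lambda>q. lamt t x q 0) p"
    by (rule continuous_eq_off_point[OF isCont_lamt isCont_lamt])
  then show ?thesis unfolding lam_def by simp
qed (rule lamt_eq_lam_generic)

lemma partials_lam: "has_partials3 lam"
proof -
  have lam_expl: "lam = (\<lambda>t x p. (pt4 c t x p 0 + px4 c t x p 0 * p + pp4 c t x p 0 * F t x p
      + pw4 c t x p 0 * H t x p) / c t x p 0)"
    unfolding lam_def lam_tilde_def by (intro ext) simp
  show ?thesis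
    unfolding lam_expl
    by (rule has_partials3I)
       (auto intro!: derivative_intros partial_derivatives[THEN has_field_derivative_imp_has_derivative,
         THEN differentiableI] c_nonzero)
qed

lemmas lam_partial_derivatives = has_partials3D[OF partials_lam]

definition Phi1 :: "real \<Rightarrow> real \<Rightarrow> real \<Rightarrow> real" where
  "Phi1 t a p = pt2 \<phi> t a + p * px2 \<phi> t a + lam t a p * (\<phi> t a - \<rho> * p)"
definition Phi1_t :: "real \<Rightarrow> real \<Rightarrow> real \<Rightarrow> real" where
  "Phi1_t t a p = pt2 (pt2 \<phi>) t a + p * pt2 (px2 \<phi>) t a + pt3 lam t a p * (\<phi> t a - \<rho> * p)
    + lam t a p * pt2 \<phi> t a"
definition Phi1_x :: "real \<Rightarrow> real \<Rightarrow> real \<Rightarrow> real" where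
  "Phi1_x t a p = px2 (pt2 \<phi>) t a + p * px2 (px2 \<phi>) t a + px3 lam t a p * (\<phi> t a - \<rho> * p)
    + lam t a p * px2 \<phi> t a"
definition Phi1_p :: "real \<Rightarrow> real \<Rightarrow> real \<Rightarrow> real" where
  "Phi1_p t a p = px2 \<phi> t a + pp3 lam t a p * (\<phi> t a - \<rho> * p) - \<rho> * lam t a p"
definition Phi2 :: "real \<Rightarrow> real \<Rightarrow> real \<Rightarrow> real \<Rightarrow> real" where
  "Phi2 t a p q = Phi1_t t a p + p * Phi1_x t a p + q * Phi1_p t a p + lam t a p * (Phi1 t a p - \<rho> * q)"

lemma Phi1_partials:
  "((\<lambda>s. Phi1 s a p) has_real_derivative Phi1_t t a p) (at t)"
  "((\<lambda>s. Phi1 t s p) has_real_derivative Phi1_x t a p) (at a)"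
  "((\<lambda>s. Phi1 t a s) has_real_derivative Phi1_p t a p) (at p)"
  unfolding Phi1_def Phi1_t_def Phi1_x_def Phi1_p_def
  by (auto intro!: derivative_eq_intros partial_derivatives lam_partial_derivatives simp: algebra_simps)

lemma phi_lam_1_eq: "phi_lam (\<lambda>t x. \<rho>) \<phi> lam 1 t X = Phi1 t (X 0) (X 1)"
  unfolding phi_lam_1 totD_lift2[OF partials_\<phi>(1)] totD_lift2_const Phi1_def
  by (simp add: lift3_def lift2_def)

lemma phi_lam_2_eq: "phi_lam (\<lambda>t x. \<rho>) \<phi> lam 2 t X = Phi2 t (X 0) (X 1) (X 2)"
proof -
  have "phi_lam (\<lambda>t x. \<rho>) \<phi> lam 1 = (\<lambda>t X. Phi1 t (X 0) (X 1))"
    using phi_lam_1_eq by (intro ext) simp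
  then have "totD (phi_lam (\<lambda>t x. \<rho>) \<phi> lam 1) t X
      = Phi1_t t (X 0) (X 1) + X 1 * Phi1_x t (X 0) (X 1) + X 2 * Phi1_p t (X 0) (X 1) + X 3 * 0"
    by (simp only:) (rule totD_explicit[where g="\<lambda>t a0 a1 a2. Phi1 t a0 a1"];
        auto intro!: Phi1_partials DERIV_const)
  then show ?thesis
    unfolding phi_lam_2 totD_lift2_const phi_lam_1_eq Phi2_def by (simp add: lift3_def)
qed

lemma eta_prol_1_eq: "eta_prol (lift4 xi) (lift4 eta) 1 t X W =
   c t (X 0) (X 1) (W 0) * (pt2 \<phi> t (X 0) + X 1 * px2 \<phi> t (X 0)) + (\<phi> t (X 0) - \<rho> * X 1) *
     (c t (X 0) (X 1) (W 0) * lam t (X 0) (X 1) + (X 2 - F t (X 0) (X 1)) * pp4 c t (X 0) (X 1) (W 0)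
      + (W 1 - H t (X 0) (X 1)) * pw4 c t (X 0) (X 1) (W 0))"
  unfolding eta_prol_1_explicit using c_lamt[of t "X 0" "X 1" "W 0"] lamt_eq_lam[of t "X 0" "X 1" "W 0"]
  by (simp add: algebra_simps)

lemma eta_prol_1_on_Delta:
  assumes "(t, X, W) \<in> Delta F H"
  shows "eta_prol (lift4 xi) (lift4 eta) 1 t X W = c t (X 0) (X 1) (W 0) * Phi1 t (X 0) (X 1)"
  unfolding eta_prol_1_eq Phi1_def using Delta_explicit[OF partials_F partials_H assms]
  by (simp add: algebra_simps)

lemma eta_prol_2_on_Delta:
  assumes XW: "(t, X, W) \<in> Delta F H"
  shows "eta_prol (lift4 xi) (lift4 eta) 2 t X W = c t (X 0) (X 1) (W 0) * Phi2 t (X 0) (X 1) (X 2)"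
proof -
  note D = Delta_explicit[OF partials_F partials_H XW]
  \<comment> \<open>On Delta the factors x2 - F and w1 - H vanish, so only their derivatives survive.\<close>
  define G where "G = (\<lambda>t a0 a1 a2 b0 b1. c t a0 a1 b0 * (pt2 \<phi> t a0 + a1 * px2 \<phi> t a0) + (\<phi> t a0 - \<rho> * a1) *
     (c t a0 a1 b0 * lam t a0 a1 + (a2 - F t a0 a1) * pp4 c t a0 a1 b0
      + (b1 - H t a0 a1) * pw4 c t a0 a1 b0))"
  have Ge: "eta_prol (lift4 xi) (lift4 eta) 1 t X W = G t (X 0) (X 1) (X 2) (W 0) (W 1)" for t X W
    unfolding eta_prol_1_eq G_def ..
  let ?a = "X 0" and ?p = "X 1" and ?w = "W 0"
  let ?c = "c t ?a ?p ?w" and ?L = "lam t ?a ?p" and ?d = "\<phi> t ?a - \<rho> * ?p"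
  let ?cp = "pp4 c t ?a ?p ?w" and ?cw = "pw4 c t ?a ?p ?w"
  have dt: "((\<lambda>s. G s (X 0) (X 1) (X 2) (W 0) (W 1)) has_real_derivative
     pt4 c t ?a ?p ?w * (pt2 \<phi> t ?a + ?p * px2 \<phi> t ?a) + ?c * (pt2 (pt2 \<phi>) t ?a + ?p * pt2 (px2 \<phi>) t ?a) + pt2 \<phi> t ?a * (?c * ?L)
       + ?d * (pt4 c t ?a ?p ?w * ?L + ?c * pt3 lam t ?a ?p - pt3 F t ?a ?p * ?cp - pt3 H t ?a ?p * ?cw)) (at t)"
    unfolding G_def by (auto intro!: derivative_eq_intros partial_derivatives lam_partial_derivatives simp: D(1,2)[simplified] algebra_simps)
  have d0: "((\<lambda>s. G t s (X 1) (X 2) (W 0) (W 1)) has_real_derivative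
     px4 c t ?a ?p ?w * (pt2 \<phi> t ?a + ?p * px2 \<phi> t ?a) + ?c * (px2 (pt2 \<phi>) t ?a + ?p * px2 (px2 \<phi>) t ?a) + px2 \<phi> t ?a * (?c * ?L)
       + ?d * (px4 c t ?a ?p ?w * ?L + ?c * px3 lam t ?a ?p - px3 F t ?a ?p * ?cp - px3 H t ?a ?p * ?cw)) (at ?a)"
    unfolding G_def by (auto intro!: derivative_eq_intros partial_derivatives lam_partial_derivatives simp: D(1,2)[simplified] algebra_simps)
  have d1: "((\<lambda>s. G t (X 0) s (X 2) (W 0) (W 1)) has_real_derivative
     ?cp * (pt2 \<phi> t ?a + ?p * px2 \<phi> t ?a) + ?c * px2 \<phi> t ?a - \<rho> * (?c * ?L)
       + ?d * (?cp * ?L + ?c * pp3 lam t ?a ?p - pp3 F t ?a ?p * ?cp - pp3 H t ?a ?p * ?cw)) (at ?p)"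
    unfolding G_def by (auto intro!: derivative_eq_intros partial_derivatives lam_partial_derivatives simp: D(1,2)[simplified] algebra_simps)
  have d2: "((\<lambda>s. G t (X 0) (X 1) s (W 0) (W 1)) has_real_derivative ?d * ?cp) (at (X 2))"
    unfolding G_def by (auto intro!: derivative_eq_intros partial_derivatives lam_partial_derivatives simp: D(1,2)[simplified] algebra_simps)
  have e0: "((\<lambda>s. G t (X 0) (X 1) (X 2) s (W 1)) has_real_derivative
     ?cw * (pt2 \<phi> t ?a + ?p * px2 \<phi> t ?a) + ?d * (?cw * ?L)) (at ?w)"
    unfolding G_def by (auto intro!: derivative_eq_intros partial_derivatives lam_partial_derivatives simp: D(1,2)[simplified] algebra_simps)
  have e1: "((\<lambda>s. G t (X 0) (X 1) (X 2) (W 0) s) has_real_derivative ?d * ?cw) (at (W 1))"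
    unfolding G_def by (auto intro!: derivative_eq_intros partial_derivatives lam_partial_derivatives simp: D(1,2)[simplified] algebra_simps)
  note tot = totDw_explicit[where g=G, OF Ge dt d0 d1 d2 e0 e1]
  have ct: "pt4 c t ?a ?p ?w = ?c * ?L - ?p * px4 c t ?a ?p ?w - ?cp * F t ?a ?p - ?cw * H t ?a ?p"
    using c_lamt[of t ?a ?p ?w] lamt_eq_lam[of t ?a ?p ?w] by (simp add: algebra_simps)
  show ?thesis
    unfolding eta_prol_2 tot totDw_xi Phi2_def Phi1_def Phi1_t_def Phi1_x_def Phi1_p_def ct
    using D by (simp add: algebra_simps)
qed

lemma Phi2_at_F:
  "\<rho> * pt3 F t a p + \<phi> t a * px3 F t a p + Phi1 t a p * pp3 F t a p = Phi2 t a p (F t a p)"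
proof -
  obtain X W where XW: "(t, X, W) \<in> Delta F H" "X 0 = a" "X 1 = p" "W 0 = 0"
    by (rule Delta_through_point)
  have X2: "X 2 = F t a p"
    using Delta_explicit(1)[OF partials_F partials_H XW(1)] XW by simp
  have "c t a p 0 * (Phi2 t a p (F t a p)
      - (\<rho> * pt3 F t a p + \<phi> t a * px3 F t a p + Phi1 t a p * pp3 F t a p))
    = prol_apply xi eta psi 2 (\<lambda>t X W. X 2 - F t (X 0) (X 1)) t X W"
    unfolding prol_apply_2_equation[OF partials_F] eta_prol_1_on_Delta[OF XW(1)]
      eta_prol_2_on_Delta[OF XW(1)] lift4_xi lift4_eta XW(2-4) X2
    by (simp add: algebra_simps)
  also have "\<dots> = 0"
    using symmetry XW(1) unfolding gen_symmetry_def by blast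
  finally show ?thesis using c_nonzero by simp
qed

lemma lambda_symmetry_lam: "lambda_symmetry F (\<lambda>t x. \<rho>) \<phi> lam"
  unfolding lambda_symmetry_def
proof (intro allI impI)
  fix t :: real and X :: "nat \<Rightarrow> real"
  assume "X 2 = F t (X 0) (X 1)"
  then show "lam_prol_apply (\<lambda>t x. \<rho>) \<phi> lam 2 (\<lambda>t X. X 2 - F t (X 0) (X 1)) t X = 0"
    unfolding lam_prol_apply_equation[OF partials_F] phi_lam_1_eq phi_lam_2_eq
    using Phi2_at_F[of t "X 0" "X 1"] by simp
qed

lemma zeta_invariant: "\<rho> * pt3 zeta t a p + \<phi> t a * px3 zeta t a p + Phi1 t a p * pp3 zeta t a p = 0"
  using zeta_invariant_lamt[of t a p 0] unfolding Phi1_def lam_def by (simp add: algebra_simps)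

lemma zeta_invariant_dt: "\<rho> * pt3 (pt3 zeta) t a p + pt2 \<phi> t a * px3 zeta t a p
    + \<phi> t a * pt3 (px3 zeta) t a p + Phi1_t t a p * pp3 zeta t a p + Phi1 t a p * pt3 (pp3 zeta) t a p = 0"
  by (rule has_real_derivative_of_zero[where f="\<lambda>s. \<rho> * pt3 zeta s a p + \<phi> s a * px3 zeta s a p + Phi1 s a p * pp3 zeta s a p" and x=t, OF zeta_invariant])
     (auto intro!: derivative_eq_intros partial_derivatives Phi1_partials)

lemma zeta_invariant_dx: "\<rho> * px3 (pt3 zeta) t a p + px2 \<phi> t a * px3 zeta t a p
    + \<phi> t a * px3 (px3 zeta) t a p + Phi1_x t a p * pp3 zeta t a p + Phi1 t a p * px3 (pp3 zeta) t a p = 0"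
  by (rule has_real_derivative_of_zero[where f="\<lambda>s. \<rho> * pt3 zeta t s p + \<phi> t s * px3 zeta t s p + Phi1 t s p * pp3 zeta t s p" and x=a, OF zeta_invariant])
     (auto intro!: derivative_eq_intros partial_derivatives Phi1_partials)

lemma zeta_invariant_dp: "\<rho> * pp3 (pt3 zeta) t a p + \<phi> t a * pp3 (px3 zeta) t a p
    + Phi1_p t a p * pp3 zeta t a p + Phi1 t a p * pp3 (pp3 zeta) t a p = 0"
  by (rule has_real_derivative_of_zero[where f="\<lambda>s. \<rho> * pt3 zeta t a s + \<phi> t a * px3 zeta t a s + Phi1 t a s * pp3 zeta t a s" and x=p, OF zeta_invariant])
     (auto intro!: derivative_eq_intros partial_derivatives Phi1_partials)

lemma z_invariant_dt: "\<rho> * pt2 (pt2 z) t a + pt2 \<phi> t a * px2 z t a + \<phi> t a * pt2 (px2 z) t a = 0"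
  by (rule has_real_derivative_of_zero[where f="\<lambda>s. \<rho> * pt2 z s a + \<phi> s a * px2 z s a" and x=t, OF z_invariant])
     (auto intro!: derivative_eq_intros partial_derivatives)

lemma z_invariant_dx: "\<rho> * px2 (pt2 z) t a + px2 \<phi> t a * px2 z t a + \<phi> t a * px2 (px2 z) t a = 0"
  by (rule has_real_derivative_of_zero[where f="\<lambda>s. \<rho> * pt2 z t s + \<phi> t s * px2 z t s" and x=a, OF z_invariant])
     (auto intro!: derivative_eq_intros partial_derivatives)

lemma lam_prol_apply_totD_zeta: "lam_prol_apply (\<lambda>t x. \<rho>) \<phi> lam 2 (totD (lift3 zeta)) t X
    = - \<rho> * lam t (X 0) (X 1) * totD (lift3 zeta) t X"
proof -
  let ?a = "X 0" and ?p = "X 1" and ?q = "X 2"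
  have mixed: "px3 (pt3 zeta) t ?a ?p = pt3 (px3 zeta) t ?a ?p" "pp3 (pt3 zeta) t ?a ?p = pt3 (pp3 zeta) t ?a ?p"
    "pp3 (px3 zeta) t ?a ?p = px3 (pp3 zeta) t ?a ?p"
    using smooth3_mixed_partials[OF smooth_zeta] by blast+
  have "lam_prol_apply (\<lambda>t x. \<rho>) \<phi> lam 2 (totD (lift3 zeta)) t X
    = \<rho> * (pt3 (pt3 zeta) t ?a ?p + ?p * pt3 (px3 zeta) t ?a ?p + ?q * pt3 (pp3 zeta) t ?a ?p)
      + \<phi> t ?a * (px3 (pt3 zeta) t ?a ?p + ?p * px3 (px3 zeta) t ?a ?p + ?q * px3 (pp3 zeta) t ?a ?p)
      + phi_lam (\<lambda>t x. \<rho>) \<phi> lam 1 t X * (pp3 (pt3 zeta) t ?a ?p + px3 zeta t ?a ?p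
          + ?p * pp3 (px3 zeta) t ?a ?p + ?q * pp3 (pp3 zeta) t ?a ?p)
      + phi_lam (\<lambda>t x. \<rho>) \<phi> lam 2 t X * pp3 zeta t ?a ?p"
    by (rule lam_prol_apply_explicit[where g="\<lambda>t a p q. pt3 zeta t a p + p * px3 zeta t a p + q * pp3 zeta t a p"])
       (auto simp: totD_lift3[OF partials_zeta(1)] intro!: derivative_eq_intros partial_derivatives)
  also have "\<dots> = (\<rho> * pt3 (pt3 zeta) t ?a ?p + pt2 \<phi> t ?a * px3 zeta t ?a ?p + \<phi> t ?a * pt3 (px3 zeta) t ?a ?p
        + Phi1_t t ?a ?p * pp3 zeta t ?a ?p + Phi1 t ?a ?p * pt3 (pp3 zeta) t ?a ?p)
      + ?p * (\<rho> * px3 (pt3 zeta) t ?a ?p + px2 \<phi> t ?a * px3 zeta t ?a ?p + \<phi> t ?a * px3 (px3 zeta) t ?a ?p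
        + Phi1_x t ?a ?p * pp3 zeta t ?a ?p + Phi1 t ?a ?p * px3 (pp3 zeta) t ?a ?p)
      + ?q * (\<rho> * pp3 (pt3 zeta) t ?a ?p + \<phi> t ?a * pp3 (px3 zeta) t ?a ?p
        + Phi1_p t ?a ?p * pp3 zeta t ?a ?p + Phi1 t ?a ?p * pp3 (pp3 zeta) t ?a ?p)
      + lam t ?a ?p * (\<rho> * pt3 zeta t ?a ?p + \<phi> t ?a * px3 zeta t ?a ?p + Phi1 t ?a ?p * pp3 zeta t ?a ?p)
      - \<rho> * lam t ?a ?p * totD (lift3 zeta) t X"
    unfolding phi_lam_1_eq phi_lam_2_eq Phi2_def mixed totD_lift3[OF partials_zeta(1)]
    by (simp add: Phi1_def algebra_simps)
  finally show ?thesis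
    unfolding zeta_invariant_dt zeta_invariant_dx zeta_invariant_dp zeta_invariant by simp
qed

lemma lam_prol_apply_totD_z: "lam_prol_apply (\<lambda>t x. \<rho>) \<phi> lam 2 (totD (lift2 z)) t X
    = - \<rho> * lam t (X 0) (X 1) * totD (lift2 z) t X"
proof -
  let ?a = "X 0" and ?p = "X 1"
  have mixed: "px2 (pt2 z) t ?a = pt2 (px2 z) t ?a"
    using smooth2_mixed_partials[OF smooth_z] by blast
  have "lam_prol_apply (\<lambda>t x. \<rho>) \<phi> lam 2 (totD (lift2 z)) t X
    = \<rho> * (pt2 (pt2 z) t ?a + ?p * pt2 (px2 z) t ?a) + \<phi> t ?a * (px2 (pt2 z) t ?a + ?p * px2 (px2 z) t ?a)
      + phi_lam (\<lambda>t x. \<rho>) \<phi> lam 1 t X * px2 z t ?a + phi_lam (\<lambda>t x. \<rho>) \<phi> lam 2 t X * 0"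
    by (rule lam_prol_apply_explicit[where g="\<lambda>t a p q. pt2 z t a + p * px2 z t a"])
       (auto simp: totD_lift2[OF partials_z(1)] intro!: derivative_eq_intros partial_derivatives)
  also have "\<dots> = (\<rho> * pt2 (pt2 z) t ?a + pt2 \<phi> t ?a * px2 z t ?a + \<phi> t ?a * pt2 (px2 z) t ?a)
      + ?p * (\<rho> * px2 (pt2 z) t ?a + px2 \<phi> t ?a * px2 z t ?a + \<phi> t ?a * px2 (px2 z) t ?a)
      + lam t ?a ?p * (\<rho> * pt2 z t ?a + \<phi> t ?a * px2 z t ?a) - \<rho> * lam t ?a ?p * totD (lift2 z) t X"
    unfolding phi_lam_1_eq mixed totD_lift2[OF partials_z(1)] by (simp add: Phi1_def algebra_simps)
  finally show ?thesis
    unfolding z_invariant_dt z_invariant_dx z_invariant by simp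
qed

text \<open>Both total derivatives are multiplied by the same factor, so their quotient is invariant.\<close>
lemma lam_prol_apply_zeta_z:
  assumes "totD (lift2 z) t X \<noteq> 0"
  shows "lam_prol_apply (\<lambda>t x. \<rho>) \<phi> lam 2 (zeta_z z zeta) t X = 0"
proof -
  have M: "pt2 z t (X 0) + X 1 * px2 z t (X 0) \<noteq> 0"
    using assms unfolding totD_lift2[OF partials_z(1)] .
  have "zeta_z z zeta = (\<lambda>t X. totD (lift3 zeta) t X / totD (lift2 z) t X)"
    unfolding zeta_z_def by (intro ext) simp
  moreover have "lam_prol_apply (\<lambda>t x. \<rho>) \<phi> lam 2 (\<lambda>t X. totD (lift3 zeta) t X / totD (lift2 z) t X) t X
    = (lam_prol_apply (\<lambda>t x. \<rho>) \<phi> lam 2 (totD (lift3 zeta)) t X * totD (lift2 z) t X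
      - totD (lift3 zeta) t X * lam_prol_apply (\<lambda>t x. \<rho>) \<phi> lam 2 (totD (lift2 z)) t X)
      / (totD (lift2 z) t X)\<^sup>2"
    by (rule lam_prol_apply_divide[where g="\<lambda>t a p q. pt3 zeta t a p + p * px3 zeta t a p + q * pp3 zeta t a p"
          and k="\<lambda>t a p q. pt2 z t a + p * px2 z t a"])
       (use M in \<open>auto simp: totD_lift3[OF partials_zeta(1)] totD_lift2[OF partials_z(1)]
         intro!: derivative_eq_intros partial_derivatives\<close>)
  ultimately show ?thesis
    unfolding lam_prol_apply_totD_zeta lam_prol_apply_totD_z by (simp add: algebra_simps)
qed

lemma pd_x_2_zeta_z:
  assumes "totD (lift2 z) t X \<noteq> 0"
  shows "pd_x 2 (zeta_z z zeta) t X \<noteq> 0"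
proof -
  have M: "pt2 z t (X 0) + X 1 * px2 z t (X 0) \<noteq> 0"
    using assms unfolding totD_lift2[OF partials_z(1)] .
  have "((\<lambda>s. zeta_z z zeta t (X(2 := s))) has_real_derivative
      pp3 zeta t (X 0) (X 1) / totD (lift2 z) t X) (at (X 2))"
    unfolding zeta_z_def totD_lift3[OF partials_zeta(1)] totD_lift2[OF partials_z(1)]
    using M by (auto intro!: derivative_eq_intros)
  then have "pd_x 2 (zeta_z z zeta) t X = pp3 zeta t (X 0) (X 1) / totD (lift2 z) t X"
    unfolding pd_x_def by (rule DERIV_imp_deriv)
  moreover have "pp3 zeta t (X 0) (X 1) \<noteq> 0"
    using zeta_p_nonzero[of t X] unfolding pd_lift3 .
  ultimately show ?thesis using assms by simp
qed

lemma invariants_independent: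
  assumes M: "totD (lift2 z) t X \<noteq> 0"
    and dt: "(\<Sum>k<3. a k * pd_t ([lift2 z, lift3 zeta, zeta_z z zeta] ! k) t X) = 0"
    and dx: "\<forall>j\<le>2. (\<Sum>k<3. a k * pd_x j ([lift2 z, lift3 zeta, zeta_z z zeta] ! k) t X) = 0"
  shows "\<forall>k<3. a k = 0"
proof -
  have dt': "a 0 * pd_t (lift2 z) t X + a 1 * pd_t (lift3 zeta) t X + a 2 * pd_t (zeta_z z zeta) t X = 0"
    using dt by (simp add: sum_lessThan_3)
  have dx': "a 0 * pd_x j (lift2 z) t X + a 1 * pd_x j (lift3 zeta) t X
      + a 2 * pd_x j (zeta_z z zeta) t X = 0" if "j \<le> 2" for j
    using dx that by (simp add: sum_lessThan_3)
  have "pd_x 2 (lift2 z) t X = 0" "pd_x 2 (lift3 zeta) t X = 0"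
    using pd_lift2(3)[of 1] pd_lift3(4)[of 0] by (simp_all add: numeral_2_eq_2)
  with dx'[of 2] pd_x_2_zeta_z[OF M] have a2: "a 2 = 0"
    by simp
  have "a 0 = 0 \<and> a 1 = 0"
  proof (rule independent[unfolded func_indep_def, rule_format])
    show "a 0 * pd_t (lift2 z) t X + a 1 * pd_t (lift3 zeta) t X = 0
      \<and> a 0 * pd_x 0 (lift2 z) t X + a 1 * pd_x 0 (lift3 zeta) t X = 0
      \<and> a 0 * pd_x 1 (lift2 z) t X + a 1 * pd_x 1 (lift3 zeta) t X = 0"
      using dt' dx'[of 0] dx'[of 1] a2 by simp
  qed
  with a2 show ?thesis
    by (auto simp: less_Suc_eq numeral_3_eq_3 numeral_2_eq_2)
qed

lemma complete_invariants:
  "complete_invariants2 (\<lambda>t x. \<rho>) \<phi> lam [lift2 z, lift3 zeta, zeta_z z zeta]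
     {(t, X). totD (lift2 z) t X \<noteq> 0}"
proof -
  have nonvanishing: "\<rho> \<noteq> 0 \<or> (\<exists>i\<le>2. phi_lam (\<lambda>t x. \<rho>) \<phi> lam i t X \<noteq> 0)" for t X
    using nondegenerate by (auto intro!: exI[of _ 0] simp: lift2_def)
  have "lam_prol_apply (\<lambda>t x. \<rho>) \<phi> lam 2 (lift2 z) t X = 0" for t X
    unfolding lam_prol_apply_lift2[OF partials_z(1)] using z_invariant by simp
  moreover have "lam_prol_apply (\<lambda>t x. \<rho>) \<phi> lam 2 (lift3 zeta) t X = 0" for t X
    unfolding lam_prol_apply_lift3[OF partials_zeta(1)] phi_lam_1_eq using zeta_invariant by simp
  ultimately have invariant: "\<forall>I \<in> set [lift2 z, lift3 zeta, zeta_z z zeta].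
      lam_prol_apply (\<lambda>t x. \<rho>) \<phi> lam 2 I t X = 0" if "totD (lift2 z) t X \<noteq> 0" for t X
    using lam_prol_apply_zeta_z[OF that] by simp
  show ?thesis
    unfolding complete_invariants2_def
    using nonvanishing invariant invariants_independent by (simp add: case_prod_beta)
qed

theorem lambda_symmetry_with_invariants:
  "\<exists>lam. (\<forall>t x p w. lam_tilde c F H t x p w = lam t x p)
      \<and> lambda_symmetry F (\<lambda>t x. \<rho>) \<phi> lam
      \<and> complete_invariants2 (\<lambda>t x. \<rho>) \<phi> lam [lift2 z, lift3 zeta, zeta_z z zeta]
          {(t, X). totD (lift2 z) t X \<noteq> 0}"
  using lamt_eq_lam lambda_symmetry_lam complete_invariants by blast

end

section \<open>The two cases of the theorem\<close>

lemma prol_apply_0_lift2w_eq_0D: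
  assumes "smooth2 z" and "\<And>t X W. prol_apply xi eta psi 0 (lift2w z) t X W = 0"
  shows "xi t x p w * pt2 z t x + eta t x p w * px2 z t x = 0"
  using assms(2)[of t "\<lambda>i. if i = 0 then x else p" "\<lambda>i. w"]
  unfolding prol_apply_0_lift2w[OF smooth2_partials(1)[OF assms(1)]] by (simp add: lift4_def)

lemma func_indep_grad_nonzero:
  assumes "func_indep z zeta"
  shows "pt2 z t x \<noteq> 0 \<or> px2 z t x \<noteq> 0"
  using assms[unfolded func_indep_def, rule_format, where t=t and X="\<lambda>i. x" and a=1 and b=0]
  by (auto simp: pd_lift2)

lemma has_partials2_slope:
  assumes "smooth2 z" and px_nonzero: "\<And>t x. px2 z t x \<noteq> 0"
  defines "\<phi> \<equiv> \<lambda>t x. - pt2 z t x / px2 z t x"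
  shows "has_partials2 \<phi>" "has_partials2 (pt2 \<phi>)" "has_partials2 (px2 \<phi>)"
proof -
  have z: "has_partials2 z" "has_partials2 (pt2 z)" "has_partials2 (px2 z)" "has_partials2 (pt2 (pt2 z))"
    "has_partials2 (px2 (pt2 z))" "has_partials2 (pt2 (px2 z))" "has_partials2 (px2 (px2 z))"
    using smooth2_partials assms(1) by meson+
  note d = has_partials2D[OF z(1)] has_partials2D[OF z(2)] has_partials2D[OF z(3)] has_partials2D[OF z(4)]
    has_partials2D[OF z(5)] has_partials2D[OF z(6)] has_partials2D[OF z(7)]
  note diff = d[THEN has_field_derivative_imp_has_derivative, THEN differentiableI]
  have "((\<lambda>s. \<phi> s x) has_real_derivative
      (pt2 z t x * pt2 (px2 z) t x - pt2 (pt2 z) t x * px2 z t x) / (px2 z t x)\<^sup>2) (at t)" for t x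
    unfolding \<phi>_def using px_nonzero[of t x]
    by (auto intro!: derivative_eq_intros d simp: field_simps power2_eq_square)
  then have pt: "pt2 \<phi> = (\<lambda>t x. (pt2 z t x * pt2 (px2 z) t x - pt2 (pt2 z) t x * px2 z t x) / (px2 z t x)\<^sup>2)"
    by (intro ext) (simp add: pt2_def[of \<phi>] DERIV_imp_deriv)
  have "((\<lambda>s. \<phi> t s) has_real_derivative
      (pt2 z t x * px2 (px2 z) t x - px2 (pt2 z) t x * px2 z t x) / (px2 z t x)\<^sup>2) (at x)" for t x
    unfolding \<phi>_def using px_nonzero[of t x]
    by (auto intro!: derivative_eq_intros d simp: field_simps power2_eq_square)
  then have px: "px2 \<phi> = (\<lambda>t x. (pt2 z t x * px2 (px2 z) t x - px2 (pt2 z) t x * px2 z t x) / (px2 z t x)\<^sup>2)"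
    by (intro ext) (simp add: px2_def[of \<phi>] DERIV_imp_deriv)
  show "has_partials2 \<phi>"
    unfolding \<phi>_def by (rule has_partials2I; auto intro!: derivative_intros diff simp: px_nonzero)
  show "has_partials2 (pt2 \<phi>)"
    unfolding pt by (rule has_partials2I; auto intro!: derivative_intros diff simp: px_nonzero)
  show "has_partials2 (px2 \<phi>)"
    unfolding px by (rule has_partials2I; auto intro!: derivative_intros diff simp: px_nonzero)
qed

lemma nonlocal_symmetry_xi_nonzero:
  assumes "smooth3 F" and "smooth3 H" and sym: "nonlocal_symmetry F H xi eta psi z zeta"
    and xi_nonzero: "\<And>t x p w. xi t x p w \<noteq> 0"
  shows "\<exists>phi lam. (\<forall>t x p w. eta t x p w / xi t x p w = phi t x)
      \<and> (\<forall>t x p w. lam_tilde xi F H t x p w = lam t x p)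
      \<and> lambda_symmetry F (\<lambda>t x. 1) phi lam
      \<and> complete_invariants2 (\<lambda>t x. 1) phi lam [lift2 z, lift3 zeta, zeta_z z zeta]
          {(t, X). totD (lift2 z) t X \<noteq> 0}"
proof -
  note ns = sym[unfolded nonlocal_symmetry_def]
  have v_z: "xi t x p w * pt2 z t x + eta t x p w * px2 z t x = 0" for t x p w
    using prol_apply_0_lift2w_eq_0D ns by blast
  have px_nonzero: "px2 z t x \<noteq> 0" for t x
    using v_z[of t x 0 0] xi_nonzero[of t x 0 0] func_indep_grad_nonzero[of z zeta t x] ns by auto
  define \<phi> where "\<phi> = (\<lambda>t x. - pt2 z t x / px2 z t x)"
  have eta_xi: "eta t x p w / xi t x p w = \<phi> t x" for t x p w
    using v_z[of t x p w] xi_nonzero[of t x p w] px_nonzero[of t x]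
    unfolding \<phi>_def by (simp add: field_simps)
  have "factored_symmetry F H xi xi eta psi 1 \<phi> z zeta"
  proof
    show "eta = (\<lambda>t x p w. \<phi> t x * xi t x p w)"
      using eta_xi xi_nonzero by (intro ext) (metis nonzero_eq_divide_eq)
    show "has_partials2 \<phi>" "has_partials2 (pt2 \<phi>)" "has_partials2 (px2 \<phi>)"
      using has_partials2_slope ns px_nonzero unfolding \<phi>_def by blast+
  qed (use assms ns in auto)
  from factored_symmetry.lambda_symmetry_with_invariants[OF this] obtain lam where
    "(\<forall>t x p w. lam_tilde xi F H t x p w = lam t x p) \<and> lambda_symmetry F (\<lambda>t x. 1) \<phi> lam
      \<and> complete_invariants2 (\<lambda>t x. 1) \<phi> lam [lift2 z, lift3 zeta, zeta_z z zeta]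
          {(t, X). totD (lift2 z) t X \<noteq> 0}"
    by blast
  with eta_xi show ?thesis by blast
qed

lemma nonlocal_symmetry_xi_zero:
  assumes "smooth3 F" and "smooth3 H" and sym: "nonlocal_symmetry F H xi eta psi z zeta"
    and xi_zero: "\<And>t x p w. xi t x p w = 0" and eta_nonzero: "\<And>t x p w. eta t x p w \<noteq> 0"
  shows "\<exists>lam. (\<forall>t x p w. lam_tilde eta F H t x p w = lam t x p)
      \<and> lambda_symmetry F (\<lambda>t x. 0) (\<lambda>t x. 1) lam
      \<and> complete_invariants2 (\<lambda>t x. 0) (\<lambda>t x. 1) lam [lift2 z, lift3 zeta, zeta_z z zeta]
          {(t, X). totD (lift2 z) t X \<noteq> 0}"
proof -
  note ns = sym[unfolded nonlocal_symmetry_def]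
  have "factored_symmetry F H eta xi eta psi 0 (\<lambda>t x. 1) z zeta"
  proof
    show "xi = (\<lambda>t x p w. 0 * eta t x p w)" using xi_zero by (intro ext) simp
  qed (use assms ns has_partials2_const in auto)
  then show ?thesis
    by (rule factored_symmetry.lambda_symmetry_with_invariants)
qed

theorem theorem3p1:
  fixes F H :: "real \<Rightarrow> real \<Rightarrow> real \<Rightarrow> real"
    and xi eta psi :: "real \<Rightarrow> real \<Rightarrow> real \<Rightarrow> real \<Rightarrow> real"
    and z :: "real \<Rightarrow> real \<Rightarrow> real"
    and zeta :: "real \<Rightarrow> real \<Rightarrow> real \<Rightarrow> real"
  assumes "smooth3 F" and "smooth3 H"
    and "nonlocal_symmetry F H xi eta psi z zeta"
  shows "((\<forall>t x p w. xi t x p w \<noteq> 0) \<longrightarrow>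
            (\<exists>phi lam.
                (\<forall>t x p w. eta t x p w / xi t x p w = phi t x)
              \<and> (\<forall>t x p w. lam_tilde xi F H t x p w = lam t x p)
              \<and> lambda_symmetry F (\<lambda>t x. 1) phi lam
              \<and> complete_invariants2 (\<lambda>t x. 1) phi lam [lift2 z, lift3 zeta, zeta_z z zeta]
                  {(t, X). totD (lift2 z) t X \<noteq> 0}))
       \<and> (((\<forall>t x p w. xi t x p w = 0) \<and> (\<forall>t x p w. eta t x p w \<noteq> 0)) \<longrightarrow>
            (\<exists>lam.
                (\<forall>t x p w. lam_tilde eta F H t x p w = lam t x p)
              \<and> lambda_symmetry F (\<lambda>t x. 0) (\<lambda>t x. 1) lam
              \<and> complete_invariants2 (\<lambda>t x. 0) (\<lambda>t x. 1) lam [lift2 z, lift3 zeta, zeta_z z zeta]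
                  {(t, X). totD (lift2 z) t X \<noteq> 0}))"
  using nonlocal_symmetry_xi_nonzero[OF assms] nonlocal_symmetry_xi_zero[OF assms] by blast

end
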